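(* There exists a nonzero homogeneous polynomial $H:\mathfrak g_2^*\to\mathbb R$, of degree $h$ say, such that for all $\mu\in\Lambda$, \[ |\partial_{\mu_k}b_j^\mu/b_j^\mu|\le|\mu|^{h-1}|H(\mu)|^{-1}\quad(j=1,\dots,M,\ k=1,\dots,d_2), \] \[ \|\partial_{\mu_k}P_j^\mu\|\le|\mu|^{h-1}|H(\mu)|^{-1}\quad(j=0,\dots,M,\ k=1,\dots,d_2). \]
   Context: $\mathfrak g=\mathfrak g_1\oplus\mathfrak g_2$ is the Lie algebra of a $2$-step stratified group ($[\mathfrak g_1,\mathfrak g_1]=\mathfrak g_2\ne\{0\}$, $[\mathfrak g,\mathfrak g_2]=0$), $d_2=\dim\mathfrak g_2$, and $\langle\cdot,\cdot\rangle$ is an inner product on $\mathfrak g_1$. For $\mu\in\mathfrak g_2^*$, $J_\mu$ is the skew-symmetric endomorphism of $\mathfrak g_1$ with $\langle J_\mu x,x'\rangle=\mu([x,x'])$; $\mathfrak g_2^*$ has the inner product pulled back from the Hilbert–Schmidt inner product via $\mu\mapsto J_\mu$, with orthonormal coordinates $\mu_1,\dots,\mu_{d_2}$. Let $\Lambda\subseteq\mathfrak g_2^*$ be a nonempty Zariski-open homogeneous (dilation-invariant) subset, $M,r_1,\dots,r_M$ nonzero natural numbers, such that for all $\mu\in\Lambda$, $\sqrt{-J_\mu^2}=\sum_{j=1}^Mb_j^\mu P_j^\mu$ with distinct $b_1^\mu,\dots,b_M^\mu\in(0,\infty)$ and mutually orthogonal projections $P_j^\mu$ of rank $2r_j$,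 where $b_j^\mu$ and $P_j^\mu$ are algebraic functions of $\mu$, real-analytic on $\Lambda$; and $P_0^\mu=I-(P_1^\mu+\dots+P_M^\mu)$ is the projection onto $\ker J_\mu$. (Such $\Lambda$ and decomposition exist.) $\|\cdot\|$ denotes the operator norm. *)

theory Defs
  imports "HOL-Analysis.Analysis"
begin

inductive poly_fun :: "('a::euclidean_space \<Rightarrow> real) \<Rightarrow> bool" where
  pf_const: "poly_fun (\<lambda>x. c)"
| pf_coord: "b \<in> Basis \<Longrightarrow> poly_fun (\<lambda>x. x \<bullet> b)"
| pf_add: "poly_fun p \<Longrightarrow> poly_fun q \<Longrightarrow> poly_fun (\<lambda>x. p x + q x)"
| pf_mult: "poly_fun p \<Longrightarrow> poly_fun q \<Longrightarrow> poly_fun (\<lambda>x. p x * q x)"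

definition homog_poly :: "nat \<Rightarrow> ('a::euclidean_space \<Rightarrow> real) \<Rightarrow> bool" where
  "homog_poly h p \<longleftrightarrow> poly_fun p \<and> (\<forall>t x. p (t *\<^sub>R x) = t ^ h * p x)"

definition zariski_open :: "'a::euclidean_space set \<Rightarrow> bool" where
  "zariski_open U \<longleftrightarrow> (\<exists>S. (\<forall>p\<in>S. poly_fun p) \<and> U = {x. \<exists>p\<in>S. p x \<noteq> 0})"

definition dilation_invariant :: "'a::real_vector set \<Rightarrow> bool" where
  "dilation_invariant U \<longleftrightarrow> (\<forall>x\<in>U. \<forall>t>0. t *\<^sub>R x \<in> U)"

definition algebraic_fun_on :: "'a::euclidean_space set \<Rightarrow> ('a \<Rightarrow> real) \<Rightarrow> bool" where
  "algebraic_fun_on S f \<longleftrightarrow>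
     (\<exists>Q :: 'a \<times> real \<Rightarrow> real. poly_fun Q \<and> (\<exists>z. Q z \<noteq> 0) \<and> (\<forall>x\<in>S. Q (x, f x) = 0))"

text \<open>Real-analytic on an open set S: locally the sum of an (absolutely, i.e.
unconditionally) convergent multivariate power series.\<close>
definition real_analytic_on :: "(real^'d \<Rightarrow> real) \<Rightarrow> (real^'d) set \<Rightarrow> bool" where
  "real_analytic_on f S \<longleftrightarrow>
     (\<forall>a\<in>S. \<exists>r>0. \<exists>c :: ('d \<Rightarrow> nat) \<Rightarrow> real. \<forall>x\<in>ball a r.
        ((\<lambda>\<alpha>. c \<alpha> * (\<Prod>i\<in>UNIV. (x $ i - a $ i) ^ \<alpha> i)) has_sum f x) UNIV)"

definition partial_deriv :: "'d::finite \<Rightarrow> (real^'d \<Rightarrow> 'b::real_normed_vector) \<Rightarrow> real^'d \<Rightarrow> 'b" where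
  "partial_deriv k f x = vector_derivative (\<lambda>t. f (x + t *\<^sub>R axis k 1)) (at 0)"

definition op_norm :: "real^'n^'m \<Rightarrow> real" where
  "op_norm A = onorm (\<lambda>x. A *v x)"

definition mat_sqrt :: "real^'n^'n \<Rightarrow> real^'n^'n" where
  "mat_sqrt A = (THE S. transpose S = S \<and> (\<forall>x. 0 \<le> x \<bullet> (S *v x)) \<and> S ** S = A)"

definition Jmu :: "('d::finite \<Rightarrow> real^'n^'n) \<Rightarrow> real^'d \<Rightarrow> real^'n^'n" where
  "Jmu J \<mu> = (\<Sum>k\<in>UNIV. (\<mu> $ k) *\<^sub>R J k)"

end

theory Submission
  imports Defs "Jordan_Normal_Form.Determinant" "HOL-Computational_Algebra.Polynomial"
begin

text \<open>Write \<open>S(\<mu>) = -J\<^sub>\<mu>\<^sup>2 = \<Sum>\<^sub>j \<lambda>\<^sub>j P\<^sub>j\<close> with \<open>\<lambda>\<^sub>0 = 0\<close> and \<open>\<lambda>\<^sub>j = (b\<^sub>j\<^sup>\<mu>)\<^sup>2\<close>.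
Differentiating \<open>P\<^sub>j\<^sup>2 = P\<^sub>j\<close>, \<open>P\<^sub>j\<^sup>T = P\<^sub>j\<close> and \<open>S P\<^sub>j = \<lambda>\<^sub>j P\<^sub>j\<close> along a coordinate direction
gives the classical perturbation formulas
\<open>\<partial>P\<^sub>j = X + X\<^sup>T\<close>, \<open>X = \<Sum>\<^sub>i\<^sub>\<noteq>\<^sub>j (\<lambda>\<^sub>j - \<lambda>\<^sub>i)\<^sup>-\<^sup>1 P\<^sub>i (\<partial>S) P\<^sub>j\<close> and \<open>(\<partial>\<lambda>\<^sub>j) P\<^sub>j = P\<^sub>j (\<partial>S) P\<^sub>j\<close>,
so all derivatives are controlled by \<open>|\<mu>|\<close> and the inverse spectral gaps \<open>|\<lambda>\<^sub>i - \<lambda>\<^sub>j|\<^sup>-\<^sup>1\<close>.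
The gaps are controlled by the polynomial \<open>H\<^sub>0(\<mu>) = det (tr S(\<mu>)\<^bsup>k+l+2\<^esup>)\<^sub>k\<^sub>,\<^sub>l\<^sub><\<^sub>M\<close>:
it factors as \<open>\<Prod>\<^sub>j tr P\<^sub>j \<cdot> det(\<lambda>\<^sub>j\<^bsup>k+1\<^esup>)\<^sup>2\<close>, which is nonzero on \<open>\<Lambda>\<close> because the \<open>\<lambda>\<^sub>j\<close> are
distinct and positive, and subtracting two rows of the Vandermonde-type factor shows
\<open>|H\<^sub>0(\<mu>)| \<lesssim> |\<lambda>\<^sub>i - \<lambda>\<^sub>j| |\<mu>|\<^bsup>2M(M+1)-2\<^esup>\<close>. A suitable multiple of \<open>H\<^sub>0\<close> is the required \<open>H\<close>.\<close>

hide_const (open) Matrix.mat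

no_notation Matrix.vec_index (infixl "$" 100)

lemma transpose_matrix_add: "transpose (A + B) = transpose A + transpose (B :: real^'n^'m)"
  by (simp add: transpose_def Finite_Cartesian_Product.vec_eq_iff)

lemma transpose_matrix_diff: "transpose (A - B) = transpose A - transpose (B :: real^'n^'m)"
  by (simp add: transpose_def Finite_Cartesian_Product.vec_eq_iff)

lemma transpose_matrix_uminus: "transpose (- A) = - transpose (A :: real^'n^'m)"
  by (simp add: transpose_def Finite_Cartesian_Product.vec_eq_iff)

lemma transpose_matrix_sum:
  "finite I \<Longrightarrow> transpose (\<Sum>i\<in>I. f i) = (\<Sum>i\<in>I. transpose (f i :: real^'n^'m))"
  by (induction I rule: finite_induct)
    (simp_all add: transpose_matrix_add transpose_def Finite_Cartesian_Product.vec_eq_iff)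

lemma matrix_add_rdistrib: "(A + B) ** C = A ** C + B ** (C :: real^'k^'n)"
  by (simp add: matrix_matrix_mult_def Finite_Cartesian_Product.vec_eq_iff sum.distrib distrib_right)

lemma matrix_diff_rdistrib: "(A - B) ** C = A ** C - B ** (C :: real^'k^'n)"
  by (simp add: matrix_matrix_mult_def Finite_Cartesian_Product.vec_eq_iff sum_subtractf algebra_simps)

lemma matrix_diff_ldistrib: "C ** (A - B) = C ** A - C ** (B :: real^'k^'n)"
  by (simp add: matrix_matrix_mult_def Finite_Cartesian_Product.vec_eq_iff sum_subtractf algebra_simps)

lemma matrix_uminus_left: "(- A) ** B = - (A ** (B :: real^'k^'n))"
  by (simp add: matrix_matrix_mult_def Finite_Cartesian_Product.vec_eq_iff sum_negf)

lemma matrix_uminus_right: "A ** (- B) = - (A ** (B :: real^'k^'n))"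
  by (simp add: matrix_matrix_mult_def Finite_Cartesian_Product.vec_eq_iff sum_negf)

lemma matrix_scaleR_left: "(c *\<^sub>R A) ** B = c *\<^sub>R (A ** (B :: real^'k^'n))"
  by (rule scalar_matrix_assoc[symmetric])

lemma matrix_scaleR_right: "A ** (c *\<^sub>R B) = c *\<^sub>R (A ** (B :: real^'k^'n))"
  by (simp add: matrix_scalar_ac scalar_matrix_assoc)

lemma matrix_sum_rdistrib:
  "finite I \<Longrightarrow> (\<Sum>i\<in>I. f i) ** B = (\<Sum>i\<in>I. f i ** (B :: real^'k^'n))"
  by (induction I rule: finite_induct) (simp_all add: matrix_add_rdistrib)

lemma matrix_sum_ldistrib:
  "finite I \<Longrightarrow> B ** (\<Sum>i\<in>I. f i) = (\<Sum>i\<in>I. B ** (f i :: real^'k^'n))"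
  by (induction I rule: finite_induct) (simp_all add: matrix_add_ldistrib)

lemma matrix_vector_uminus_left: "(- A) *v x = - (A *v x :: real^'m)"
  by (simp add: matrix_vector_mult_def Finite_Cartesian_Product.vec_eq_iff sum_negf)

lemma trace_scaleR: "trace (c *\<^sub>R A) = c * trace (A :: real^'n^'n)"
  by (simp add: trace_def sum_distrib_left)

lemma trace_matrix_sum: "finite I \<Longrightarrow> trace (\<Sum>i\<in>I. f i) = (\<Sum>i\<in>I. trace (f i :: real^'n^'n))"
  by (induction I rule: finite_induct) (simp_all add: trace_def sum.distrib)

lemma inner_matrix_vector_transpose:
  fixes A :: "real^'n^'m"
  shows "(A *v x) \<bullet> y = x \<bullet> (transpose A *v y)"
  using dot_lmul_matrix[of x "transpose A" y] by (simp add: inner_commute)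

lemma inner_matrix_vector_symmetric:
  fixes A :: "real^'n^'n"
  assumes "transpose A = A"
  shows "(A *v x) \<bullet> y = x \<bullet> (A *v y)"
  using inner_matrix_vector_transpose[of A x y] assms by simp

lemma bounded_bilinear_matrix_mult:
  "bounded_bilinear ((**) :: real^'n^'m \<Rightarrow> real^'k^'n \<Rightarrow> real^'k^'m)"
proof -
  have "bilinear ((**) :: real^'n^'m \<Rightarrow> real^'k^'n \<Rightarrow> real^'k^'m)"
    unfolding bilinear_def
    by (auto intro!: linearI simp: matrix_add_rdistrib matrix_add_ldistrib matrix_scaleR_left matrix_scaleR_right)
  then show ?thesis by (rule bilinear_conv_bounded_bilinear[THEN iffD1])
qed

lemma has_vector_derivative_matrix_mult:
  fixes f :: "real \<Rightarrow> real^'n^'m" and g :: "real \<Rightarrow> real^'k^'n"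
  assumes "(f has_vector_derivative f') (at x)" "(g has_vector_derivative g') (at x)"
  shows "((\<lambda>t. f t ** g t) has_vector_derivative (f x ** g' + f' ** g x)) (at x)"
  by (rule bounded_bilinear.has_vector_derivative[OF bounded_bilinear_matrix_mult assms])

lemma has_vector_derivative_transpose:
  fixes f :: "real \<Rightarrow> real^'n^'m"
  assumes "(f has_vector_derivative f') (at x)"
  shows "((\<lambda>t. transpose (f t)) has_vector_derivative transpose f') (at x)"
proof -
  have "linear (transpose :: real^'n^'m \<Rightarrow> real^'m^'n)"
    by (rule linearI) (simp_all add: transpose_matrix_add transpose_scalar)
  then show ?thesis
    by (rule bounded_linear.has_vector_derivative[OF linear_conv_bounded_linear[THEN iffD1] assms])
qed

lemma has_vector_derivative_componentwise:
  fixes f :: "real \<Rightarrow> 'a::euclidean_space^'n"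
  assumes "\<And>i. ((\<lambda>t. f t $ i) has_vector_derivative D $ i) (at x)"
  shows "(f has_vector_derivative D) (at x)"
  unfolding has_vector_derivative_def
proof (rule has_derivative_componentwise_within[THEN iffD2], intro ballI)
  fix b :: "'a^'n" assume b: "b \<in> Basis"
  obtain i u where bu: "b = axis i u" "u \<in> Basis" using b unfolding Basis_vec_def by blast
  have "((\<lambda>t. f t $ i) has_derivative (\<lambda>h. h *\<^sub>R D $ i)) (at x within UNIV)"
    using assms[of i] by (simp add: has_vector_derivative_def)
  from has_derivative_componentwise_within[THEN iffD1, OF this] bu(2)
  have "((\<lambda>t. f t $ i \<bullet> u) has_derivative (\<lambda>h. (h *\<^sub>R D $ i) \<bullet> u)) (at x within UNIV)"
    by (rule bspec)
  then show "((\<lambda>t. f t \<bullet> b) has_derivative (\<lambda>h. (h *\<^sub>R D) \<bullet> b)) (at x within UNIV)"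
    unfolding bu(1) inner_axis by simp
qed

lemma vector_derivative_eq_on_open:
  fixes f g :: "real \<Rightarrow> 'a::real_normed_vector"
  assumes "(f has_vector_derivative D1) (at 0)" "(g has_vector_derivative D2) (at 0)"
    and "open T" "0 \<in> T" "\<And>t. t \<in> T \<Longrightarrow> f t = g t"
  shows "D1 = D2"
proof -
  have "(g has_vector_derivative D1) (at 0)"
    by (rule has_vector_derivative_transform_within_open[OF assms(1) assms(3,4)]) (use assms(5) in auto)
  then show ?thesis using assms(2) vector_derivative_unique_at by blast
qed

section \<open>The operator norm of a matrix\<close>

lemma op_norm_matrix_vector_le: "norm (A *v x) \<le> op_norm A * norm x"
  unfolding op_norm_def by (rule onorm) simp

lemma op_norm_nonneg: "op_norm A \<ge> 0"
  unfolding op_norm_def by (rule onorm_pos_le) simp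

lemma op_norm_pos: "(A :: real^'k^'n) \<noteq> 0 \<Longrightarrow> op_norm A > 0"
  unfolding op_norm_def by (subst onorm_pos_lt) (auto simp: matrix_eq)

lemma op_norm_zero: "op_norm (0 :: real^'k^'n) = 0"
  unfolding op_norm_def by (simp add: onorm_eq_0)

lemma op_norm_mult_le: "op_norm (A ** B) \<le> op_norm A * op_norm (B :: real^'k^'n)"
proof -
  have "(*v) (A ** B) = (*v) A \<circ> (*v) B" by (simp add: fun_eq_iff matrix_vector_mul_assoc)
  then show ?thesis unfolding op_norm_def using onorm_compose[of "(*v) A" "(*v) B"] by simp
qed

lemma op_norm_add_le: "op_norm (A + B) \<le> op_norm A + op_norm (B :: real^'k^'n)"
proof -
  have "(*v) (A + B) = (\<lambda>x. A *v x + B *v x)" by (simp add: fun_eq_iff matrix_vector_mult_add_rdistrib)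
  then show ?thesis unfolding op_norm_def using onorm_triangle[of "(*v) A" "(*v) B"] by simp
qed

lemma op_norm_scaleR: "op_norm (c *\<^sub>R A) = \<bar>c\<bar> * op_norm (A :: real^'k^'n)"
proof -
  have "(*v) (c *\<^sub>R A) = (\<lambda>x. c *\<^sub>R (A *v x))" by (simp add: fun_eq_iff scaleR_matrix_vector_assoc)
  then show ?thesis unfolding op_norm_def using onorm_scaleR[of "(*v) A" c] by simp
qed

lemma op_norm_uminus: "op_norm (- A) = op_norm (A :: real^'k^'n)"
  using op_norm_scaleR[of "-1" A] by simp

lemma op_norm_sum_le: "finite I \<Longrightarrow> op_norm (\<Sum>i\<in>I. f i) \<le> (\<Sum>i\<in>I. op_norm (f i :: real^'k^'n))"
  by (induction I rule: finite_induct) (auto simp: op_norm_zero intro: order.trans[OF op_norm_add_le])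

lemma op_norm_projection_le:
  fixes Q :: "real^'n^'n"
  assumes "Q ** Q = Q" "transpose Q = Q"
  shows "op_norm Q \<le> 1"
  unfolding op_norm_def
proof (rule onorm_le)
  fix x :: "real^'n"
  have "(Q *v x) \<bullet> (Q *v x) = x \<bullet> (Q *v (Q *v x))"
    using inner_matrix_vector_symmetric[of Q x "Q *v x"] assms by simp
  also have "\<dots> = x \<bullet> (Q *v x)" using assms by (simp add: matrix_vector_mul_assoc)
  also have "\<dots> \<le> norm x * norm (Q *v x)" by (rule norm_cauchy_schwarz)
  finally have "norm (Q *v x) ^ 2 \<le> norm x * norm (Q *v x)" by (simp add: power2_norm_eq_inner)
  then show "norm (Q *v x) \<le> 1 * norm x"
    by (cases "norm (Q *v x) = 0") (auto simp: power2_eq_square)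
qed

lemma op_norm_sandwich_le:
  assumes "op_norm A \<le> 1" "op_norm B \<le> 1"
  shows "op_norm (A ** S ** B) \<le> op_norm (S :: real^'n^'n)"
proof -
  have "op_norm (A ** S ** B) \<le> op_norm (A ** S) * op_norm B" by (rule op_norm_mult_le)
  also have "\<dots> \<le> op_norm A * op_norm S * op_norm B"
    by (intro mult_right_mono op_norm_mult_le op_norm_nonneg)
  also have "\<dots> \<le> 1 * op_norm S * 1"
    using assms by (intro mult_mono) (auto simp: op_norm_nonneg)
  finally show ?thesis by simp
qed

lemma eigenvalue_abs_le_op_norm:
  fixes Q S :: "real^'n^'n"
  assumes "S ** Q = c *\<^sub>R Q" "Q \<noteq> 0"
  shows "\<bar>c\<bar> \<le> op_norm S"
proof -
  have "\<bar>c\<bar> * op_norm Q = op_norm (S ** Q)" using assms(1) by (simp add: op_norm_scaleR)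
  also have "\<dots> \<le> op_norm S * op_norm Q" by (rule op_norm_mult_le)
  finally show ?thesis using op_norm_pos[OF assms(2)] by simp
qed

lemma sandwich_eigenvalue_abs_le_op_norm:
  fixes Q S :: "real^'n^'n"
  assumes "c *\<^sub>R Q = Q ** S ** Q" "op_norm Q \<le> 1" "Q \<noteq> 0"
  shows "\<bar>c\<bar> \<le> op_norm S"
proof -
  have Q: "op_norm Q > 0" using op_norm_pos[OF assms(3)] .
  have "\<bar>c\<bar> * op_norm Q = op_norm (Q ** S ** Q)" using assms(1) by (metis op_norm_scaleR)
  also have "\<dots> \<le> op_norm (Q ** S) * op_norm Q" by (rule op_norm_mult_le)
  also have "\<dots> \<le> (op_norm Q * op_norm S) * op_norm Q"
    using op_norm_mult_le[of Q S] Q by (intro mult_right_mono) auto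
  also have "\<dots> \<le> (1 * op_norm S) * op_norm Q"
    using assms(2) Q op_norm_nonneg[of S] by (intro mult_right_mono) auto
  finally show ?thesis using Q by simp
qed

lemma projection_diag_eq_norm_column:
  fixes Q :: "real^'n^'n"
  assumes "Q ** Q = Q" "transpose Q = Q"
  shows "Q $ i $ i = (norm (Q *v axis i 1))\<^sup>2"
proof -
  have "(Q *v axis i 1) \<bullet> (Q *v axis i 1) = axis i 1 \<bullet> (Q *v (Q *v axis i 1))"
    using inner_matrix_vector_symmetric[of Q "axis i 1" "Q *v axis i 1"] assms by simp
  also have "\<dots> = axis i 1 \<bullet> (Q *v axis i 1)" using assms by (simp add: matrix_vector_mul_assoc)
  also have "\<dots> = Q $ i $ i" by (simp add: inner_axis' matrix_vector_mult_basis column_def)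
  finally show ?thesis by (simp add: power2_norm_eq_inner)
qed

lemma trace_projection_bounds:
  fixes Q :: "real^'n^'n"
  assumes "Q ** Q = Q" "transpose Q = Q" "Q \<noteq> 0"
  shows "0 < trace Q" "trace Q \<le> real CARD('n)"
proof -
  have tr: "trace Q = (\<Sum>i\<in>UNIV. (norm (Q *v axis i 1))\<^sup>2)"
    by (simp add: trace_def projection_diag_eq_norm_column[OF assms(1,2)])
  have "norm (Q *v axis i 1) \<le> 1" for i
    using op_norm_matrix_vector_le[of Q "axis i 1"] op_norm_projection_le[OF assms(1,2)]
      op_norm_nonneg[of Q] by simp
  then have "trace Q \<le> (\<Sum>i\<in>(UNIV::'n set). 1)"
    unfolding tr by (intro sum_mono) (simp add: power_le_one)
  then show "trace Q \<le> real CARD('n)" by simp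
  have "\<exists>i. column i Q \<noteq> 0"
  proof (rule ccontr)
    assume "\<not> ?thesis"
    then have "Q = 0" by (simp add: column_def Finite_Cartesian_Product.vec_eq_iff)
    then show False using assms(3) by simp
  qed
  then obtain i where "column i Q \<noteq> 0" by blast
  then have "0 < (norm (Q *v axis i 1))\<^sup>2" by (simp add: matrix_vector_mult_basis)
  also have "\<dots> \<le> (\<Sum>i\<in>UNIV. (norm (Q *v axis i 1))\<^sup>2)" by (rule member_le_sum) auto
  finally show "0 < trace Q" by (simp add: tr)
qed

section \<open>Square roots of positive semidefinite matrices\<close>

definition pos_semidef :: "real^'n^'n \<Rightarrow> bool" where
  "pos_semidef X \<longleftrightarrow> transpose X = X \<and> (\<forall>x. 0 \<le> x \<bullet> (X *v x))"

definition invariant_subspace :: "real^'n^'n \<Rightarrow> (real^'n) set \<Rightarrow> bool" where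
  "invariant_subspace A W \<longleftrightarrow> subspace W \<and> (\<forall>x\<in>W. A *v x \<in> W)"

lemma quadratic_form_maximiser_orthogonal:
  fixes A :: "real^'n^'n" and x y :: "real^'n"
  assumes sym: "transpose A = A" and sub: "subspace W" and x: "x \<in> W" "x \<bullet> x = 1"
    and bound: "\<And>v. v \<in> W \<Longrightarrow> v \<bullet> (A *v v) \<le> (x \<bullet> (A *v x)) * (v \<bullet> v)"
    and y: "y \<in> W" "y \<bullet> x = 0"
  shows "y \<bullet> (A *v x) = 0"
proof -
  define c where "c = x \<bullet> (A *v x)"
  define a where "a = y \<bullet> (A *v x)"
  define B where "B = c * (y \<bullet> y) - y \<bullet> (A *v y)"
  txt \<open>Perturbing \<open>x\<close> to \<open>x + t y\<close> gives \<open>2 t a \<le> t\<^sup>2 B\<close> for all \<open>t\<close>, which forces \<open>a = 0\<close>.\<close>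
  have key: "2 * t * a \<le> t^2 * B" for t
  proof -
    have "x + t *\<^sub>R y \<in> W" using x(1) y sub by (simp add: subspace_add subspace_scale)
    from bound[OF this, folded c_def]
    have b1: "(x + t *\<^sub>R y) \<bullet> (A *v (x + t *\<^sub>R y)) \<le> c * ((x + t *\<^sub>R y) \<bullet> (x + t *\<^sub>R y))" .
    have xay: "x \<bullet> (A *v y) = a"
      using inner_matrix_vector_symmetric[OF sym, of x y] by (simp add: a_def inner_commute)
    have e1: "(x + t *\<^sub>R y) \<bullet> (A *v (x + t *\<^sub>R y)) = c + 2 * t * a + t^2 * (y \<bullet> (A *v y))"
      using xay by (simp add: matrix_vector_right_distrib inner_add_left
          inner_add_right a_def c_def power2_eq_square algebra_simps)
    have e2: "(x + t *\<^sub>R y) \<bullet> (x + t *\<^sub>R y) = 1 + t^2 * (y \<bullet> y)"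
      using x(2) y(2) by (simp add: inner_add_left inner_add_right power2_eq_square inner_commute)
    have "c + 2 * t * a + t^2 * (y \<bullet> (A *v y)) \<le> c * (1 + t^2 * (y \<bullet> y))"
      using b1 e1 e2 by simp
    then show ?thesis by (simp add: B_def algebra_simps)
  qed
  have pos: "1 + \<bar>B\<bar> > 0" by simp
  have "2 * (a / (1 + \<bar>B\<bar>)) * a \<le> (a / (1 + \<bar>B\<bar>))^2 * B" using key .
  also have "\<dots> \<le> (a / (1 + \<bar>B\<bar>))^2 * (1 + \<bar>B\<bar>)"
    by (intro mult_left_mono) auto
  also have "\<dots> = a * a / (1 + \<bar>B\<bar>)" using pos by (simp add: power2_eq_square)
  finally have "(2 * (a * a)) / (1 + \<bar>B\<bar>) \<le> (a * a) / (1 + \<bar>B\<bar>)" by (simp add: mult_ac)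
  then have "a * a \<le> 0" using pos by (simp add: divide_le_cancel)
  then show ?thesis unfolding a_def by (smt (verit) mult_le_0_iff)
qed

lemma symmetric_invariant_subspace_has_eigenvector:
  fixes A :: "real^'n^'n"
  assumes sym: "transpose A = A" and W: "invariant_subspace A W" and ne: "W \<noteq> {0}"
  shows "\<exists>x\<in>W. norm x = 1 \<and> A *v x = (x \<bullet> (A *v x)) *\<^sub>R x"
proof -
  have sub: "subspace W" and inv: "\<And>x. x \<in> W \<Longrightarrow> A *v x \<in> W"
    using W by (auto simp: invariant_subspace_def)
  have "0 \<in> W" using sub by (simp add: subspace_0)
  then obtain w where w: "w \<in> W" "w \<noteq> 0" using ne by blast
  let ?K = "W \<inter> sphere 0 1"
  have cK: "compact ?K"
    by (simp add: closed_subspace sub closed_Int_compact)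
  have "(1 / norm w) *\<^sub>R w \<in> ?K" using w sub by (simp add: subspace_scale)
  then have neK: "?K \<noteq> {}" by blast
  have cont: "continuous_on ?K (\<lambda>x. x \<bullet> (A *v x))"
    by (intro continuous_intros)
  txt \<open>A maximiser of the Rayleigh quotient on the unit sphere of \<open>W\<close> is an eigenvector.\<close>
  obtain x where xK: "x \<in> ?K" and xmax: "\<And>y. y \<in> ?K \<Longrightarrow> y \<bullet> (A *v y) \<le> x \<bullet> (A *v x)"
    using continuous_attains_sup[OF cK neK cont] by auto
  define c where "c = x \<bullet> (A *v x)"
  have xW: "x \<in> W" and nx: "norm x = 1" using xK by auto
  have bound: "v \<bullet> (A *v v) \<le> (x \<bullet> (A *v x)) * (v \<bullet> v)" if "v \<in> W" for v
  proof (cases "v = 0")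
    case True then show ?thesis by simp
  next
    case False
    let ?u = "(1 / norm v) *\<^sub>R v"
    have "?u \<in> ?K" using that False sub by (simp add: subspace_scale)
    then have "?u \<bullet> (A *v ?u) \<le> x \<bullet> (A *v x)" by (rule xmax)
    then have "(1 / norm v)^2 * (v \<bullet> (A *v v)) \<le> x \<bullet> (A *v x)"
      by (simp add: matrix_vector_mult_scaleR power2_eq_square algebra_simps)
    moreover have "v \<bullet> v = (norm v)^2" by (simp add: power2_norm_eq_inner)
    moreover have "norm v > 0" using False by simp
    ultimately show ?thesis by (simp add: field_simps power2_eq_square)
  qed
  have xx: "x \<bullet> x = 1" using nx by (simp add: norm_eq_1)
  have orth: "y \<bullet> (A *v x) = 0" if "y \<in> W" "y \<bullet> x = 0" for y
    by (rule quadratic_form_maximiser_orthogonal[OF sym sub xW xx bound that])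
  define z where "z = A *v x - c *\<^sub>R x"
  have zW: "z \<in> W" using xW inv sub unfolding z_def by (simp add: subspace_diff subspace_scale)
  have zx: "z \<bullet> x = 0"
    using nx by (simp add: z_def c_def inner_diff_left inner_diff_right norm_eq_1 inner_commute)
  have "z \<bullet> z = z \<bullet> (A *v x) - c * (z \<bullet> x)" by (simp add: z_def inner_diff_right)
  also have "\<dots> = 0" using orth[OF zW zx] zx by simp
  finally have "z = 0" by simp
  then show ?thesis using xW nx unfolding z_def c_def by auto
qed

lemma symmetric_invariant_subspace_split:
  fixes A :: "real^'n^'n"
  assumes sym: "transpose A = A" and W: "invariant_subspace A W" and ne: "W \<noteq> {0}"
  obtains x c where "x \<in> W" "norm x = 1" "A *v x = c *\<^sub>R x"
    "invariant_subspace A (W \<inter> {y. y \<bullet> x = 0})" "dim (W \<inter> {y. y \<bullet> x = 0}) < dim W"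
proof -
  obtain x where x: "x \<in> W" "norm x = 1" "A *v x = (x \<bullet> (A *v x)) *\<^sub>R x"
    using symmetric_invariant_subspace_has_eigenvector[OF assms] by blast
  define c where "c = x \<bullet> (A *v x)"
  have sub: "subspace W" using W by (simp add: invariant_subspace_def)
  let ?W' = "W \<inter> {y. y \<bullet> x = 0}"
  have sub': "subspace ?W'" using sub by (simp add: subspace_inter subspace_hyperplane2)
  have "A *v y \<in> ?W'" if "y \<in> ?W'" for y
  proof -
    have "(A *v y) \<bullet> x = y \<bullet> (A *v x)" by (rule inner_matrix_vector_symmetric[OF sym])
    also have "\<dots> = 0" using that x(3)[folded c_def] by simp
    finally show ?thesis using W that by (auto simp: invariant_subspace_def)
  qed
  then have "invariant_subspace A ?W'" using sub' by (simp add: invariant_subspace_def)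
  moreover have "dim ?W' < dim W"
  proof (rule dim_psubset)
    have "span ?W' = ?W'" "span W = W" using sub sub' by (simp_all add: span_eq_iff)
    moreover have "x \<notin> ?W'" using x by auto
    ultimately show "span ?W' \<subset> span W" using x(1) by blast
  qed
  ultimately show ?thesis using that[OF x(1,2) x(3)[folded c_def]] by blast
qed

lemma psd_sqrt_eigenvector:
  fixes A Z :: "real^'n^'n"
  assumes Z: "pos_semidef Z" and ZA: "Z ** Z = A" and x: "A *v x = c *\<^sub>R x" "norm x = 1"
  shows "Z *v x = sqrt c *\<^sub>R x"
proof -
  have Zsym: "transpose Z = Z" using Z by (simp add: pos_semidef_def)
  have xx: "x \<bullet> x = 1" using x(2) by (simp add: norm_eq_1)
  have "(Z *v x) \<bullet> (Z *v x) = x \<bullet> (A *v x)"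
    using inner_matrix_vector_symmetric[OF Zsym, of x "Z *v x"]
    by (simp add: ZA[symmetric] matrix_vector_mul_assoc)
  then have c: "(Z *v x) \<bullet> (Z *v x) = c" using x(1) xx by simp
  then have c0: "0 \<le> c" by (metis inner_ge_zero)
  show ?thesis
  proof (cases "c = 0")
    case True
    then show ?thesis using c by simp
  next
    case False
    txt \<open>\<open>(Z + \<surd>c) v = 0\<close> for \<open>v = (Z - \<surd>c) x\<close>, and \<open>Z + \<surd>c\<close> is positive definite.\<close>
    define v where "v = Z *v x - sqrt c *\<^sub>R x"
    have "Z *v v + sqrt c *\<^sub>R v = (Z ** Z) *v x - c *\<^sub>R x"
      using c0 by (simp add: v_def matrix_vector_mul_assoc[symmetric] matrix_vector_right_distrib
          matrix_vector_mult_scaleR scaleR_diff_right algebra_simps)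
    also have "\<dots> = 0" using ZA x by simp
    finally have h: "Z *v v + sqrt c *\<^sub>R v = 0" .
    have "0 = v \<bullet> (Z *v v + sqrt c *\<^sub>R v)" using h by simp
    also have "\<dots> = v \<bullet> (Z *v v) + sqrt c * (v \<bullet> v)" by (simp add: inner_add_right)
    finally have "sqrt c * (v \<bullet> v) \<le> 0" using Z unfolding pos_semidef_def by (smt (verit))
    moreover have "sqrt c > 0" using c0 False by simp
    ultimately have "v \<bullet> v \<le> 0" by (simp add: mult_le_0_iff)
    then have "v = 0" by (metis inner_eq_zero_iff inner_ge_zero order_antisym)
    then show ?thesis by (simp add: v_def)
  qed
qed

lemma psd_sqrt_unique_on_invariant_subspace:
  fixes A X Y :: "real^'n^'n"
  assumes sym: "transpose A = A" and X: "pos_semidef X" and Y: "pos_semidef Y"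
    and XA: "X ** X = A" and YA: "Y ** Y = A"
  shows "invariant_subspace A W \<Longrightarrow> \<forall>y\<in>W. X *v y = Y *v y"
proof (induction "dim W" arbitrary: W rule: less_induct)
  case less
  show ?case
  proof (cases "W = {0}")
    case True then show ?thesis by simp
  next
    case False
    obtain x c where xW: "x \<in> W" and nx: "norm x = 1" and ex: "A *v x = c *\<^sub>R x"
      and inv': "invariant_subspace A (W \<inter> {y. y \<bullet> x = 0})"
      and dim': "dim (W \<inter> {y. y \<bullet> x = 0}) < dim W"
      using symmetric_invariant_subspace_split[OF sym less.prems False] by blast
    have xX: "X *v x = Y *v x"
      using psd_sqrt_eigenvector[OF X XA ex nx] psd_sqrt_eigenvector[OF Y YA ex nx] by simp
    have IH: "\<forall>y\<in>W \<inter> {y. y \<bullet> x = 0}. X *v y = Y *v y" using less.hyps[OF dim' inv'] .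
    have sub: "subspace W" using less.prems by (simp add: invariant_subspace_def)
    show ?thesis
    proof
      fix y assume yW: "y \<in> W"
      let ?y' = "y - (y \<bullet> x) *\<^sub>R x"
      have "x \<bullet> x = 1" using nx by (simp add: norm_eq_1)
      then have "?y' \<in> W \<inter> {y. y \<bullet> x = 0}"
        using yW xW sub by (simp add: subspace_diff subspace_scale inner_diff_left)
      then have "X *v ?y' = Y *v ?y'" using IH by blast
      then show "X *v y = Y *v y" using xX
        by (simp add: matrix_vector_mult_diff_distrib matrix_vector_mult_scaleR)
    qed
  qed
qed

definition outer_prod :: "real^'n \<Rightarrow> real^'n^'n" where
  "outer_prod x = (\<chi> i j. x$i * x$j)"

lemma outer_prod_matrix_vector: "outer_prod x *v y = (x \<bullet> y) *\<^sub>R x"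
  by (simp add: outer_prod_def matrix_vector_mult_def inner_vec_def
      Finite_Cartesian_Product.vec_eq_iff sum_distrib_left mult_ac)

lemma transpose_outer_prod: "transpose (outer_prod x) = outer_prod x"
  by (simp add: outer_prod_def transpose_def Finite_Cartesian_Product.vec_eq_iff mult.commute)

lemma pos_semidef_add_outer_prod:
  fixes X :: "real^'n^'n"
  assumes X: "pos_semidef X" and a: "0 \<le> a"
  shows "pos_semidef (X + a *\<^sub>R outer_prod x)"
proof -
  have "transpose (X + a *\<^sub>R outer_prod x) = X + a *\<^sub>R outer_prod x"
    using X by (simp add: pos_semidef_def transpose_matrix_add transpose_scalar transpose_outer_prod)
  moreover have "0 \<le> y \<bullet> ((X + a *\<^sub>R outer_prod x) *v y)" for y
  proof -
    have "y \<bullet> ((X + a *\<^sub>R outer_prod x) *v y) = y \<bullet> (X *v y) + a * (x \<bullet> y) * (x \<bullet> y)"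
      by (simp add: matrix_vector_mult_add_rdistrib scaleR_matrix_vector_assoc[symmetric]
          outer_prod_matrix_vector inner_add_right inner_commute)
    moreover have "0 \<le> y \<bullet> (X *v y)" using X by (simp add: pos_semidef_def)
    moreover have "0 \<le> a * (x \<bullet> y) * (x \<bullet> y)" using a by (simp add: mult.assoc)
    ultimately show ?thesis by simp
  qed
  ultimately show ?thesis by (simp add: pos_semidef_def)
qed

lemma psd_sqrt_exists_on_invariant_subspace:
  fixes A :: "real^'n^'n"
  assumes A: "pos_semidef A"
  shows "invariant_subspace A W \<Longrightarrow> \<exists>X. pos_semidef X \<and> (\<forall>y\<in>W. X *v (X *v y) = A *v y) \<and>
            (\<forall>y. (\<forall>w\<in>W. w \<bullet> y = 0) \<longrightarrow> X *v y = 0)"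
proof (induction "dim W" arbitrary: W rule: less_induct)
  case less
  have sym: "transpose A = A" using A by (simp add: pos_semidef_def)
  show ?case
  proof (cases "W = {0}")
    case True
    show ?thesis
      by (rule exI[of _ 0]) (simp add: pos_semidef_def True transpose_def Finite_Cartesian_Product.vec_eq_iff)
  next
    case False
    obtain x c where xW: "x \<in> W" and nx: "norm x = 1" and ex: "A *v x = c *\<^sub>R x"
      and inv': "invariant_subspace A (W \<inter> {y. y \<bullet> x = 0})"
      and dim': "dim (W \<inter> {y. y \<bullet> x = 0}) < dim W"
      using symmetric_invariant_subspace_split[OF sym less.prems False] by blast
    have xx: "x \<bullet> x = 1" using nx by (simp add: norm_eq_1)
    have "0 \<le> x \<bullet> (A *v x)" using A by (simp add: pos_semidef_def)
    then have c0: "c \<ge> 0" using ex xx by simp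
    let ?W' = "W \<inter> {y. y \<bullet> x = 0}"
    have sub: "subspace W" using less.prems by (simp add: invariant_subspace_def)
    from less.hyps[OF dim' inv'] obtain X' where X': "pos_semidef X'"
      and X'W: "\<forall>y\<in>?W'. X' *v (X' *v y) = A *v y"
      and X'0: "\<forall>y. (\<forall>w\<in>?W'. w \<bullet> y = 0) \<longrightarrow> X' *v y = 0" by blast
    have X'x: "X' *v x = 0" using X'0 by (simp add: inner_commute)
    have xX'y: "x \<bullet> (X' *v y) = 0" for y
      using inner_matrix_vector_symmetric[of X' x y] X' X'x by (simp add: pos_semidef_def)
    txt \<open>Add the rank-one piece \<open>\<surd>c x x\<^sup>T\<close> to the square root on the orthogonal complement.\<close>
    define X where "X = X' + sqrt c *\<^sub>R outer_prod x"
    have Xv: "X *v y = X' *v y + (sqrt c * (x \<bullet> y)) *\<^sub>R x" for y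
      by (simp add: X_def matrix_vector_mult_add_rdistrib scaleR_matrix_vector_assoc[symmetric]
          outer_prod_matrix_vector)
    have XX: "X *v (X *v y) = X' *v (X' *v y) + (c * (x \<bullet> y)) *\<^sub>R x" for y
    proof -
      have "X *v (X *v y) = X' *v (X' *v y) + (sqrt c * (x \<bullet> y)) *\<^sub>R (X' *v x)
          + (sqrt c * (x \<bullet> (X' *v y)) + sqrt c * (sqrt c * (x \<bullet> y)) * (x \<bullet> x)) *\<^sub>R x"
        unfolding Xv by (simp add: matrix_vector_right_distrib matrix_vector_mult_scaleR inner_add_right
            scaleR_add_left algebra_simps)
      also have "\<dots> = X' *v (X' *v y) + (c * (x \<bullet> y)) *\<^sub>R x"
        using X'x xX'y xx c0 by simp
      finally show ?thesis .
    qed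
    have psdX: "pos_semidef X"
      unfolding X_def by (rule pos_semidef_add_outer_prod[OF X']) (use c0 in simp)
    show ?thesis
    proof (intro exI conjI ballI allI impI)
      show "pos_semidef X" by (rule psdX)
    next
      fix y assume yW: "y \<in> W"
      let ?y' = "y - (y \<bullet> x) *\<^sub>R x"
      have y'W: "?y' \<in> ?W'"
        using yW xW sub xx by (simp add: subspace_diff subspace_scale inner_diff_left)
      have "X' *v (X' *v y) = X' *v (X' *v ?y')"
        using X'x by (simp add: matrix_vector_mult_diff_distrib matrix_vector_mult_scaleR)
      also have "\<dots> = A *v ?y'" using X'W y'W by blast
      also have "\<dots> = A *v y - (c * (y \<bullet> x)) *\<^sub>R x"
        using ex by (simp add: matrix_vector_mult_diff_distrib matrix_vector_mult_scaleR mult.commute)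
      finally show "X *v (X *v y) = A *v y" unfolding XX by (simp add: inner_commute)
    next
      fix y assume perp: "\<forall>w\<in>W. w \<bullet> y = 0"
      then have "X' *v y = 0" using X'0 by auto
      moreover have "x \<bullet> y = 0" using perp xW by blast
      ultimately show "X *v y = 0" by (simp add: Xv)
    qed
  qed
qed

lemma mat_sqrt_square:
  fixes A :: "real^'n^'n"
  assumes A: "pos_semidef A"
  shows "mat_sqrt A ** mat_sqrt A = A"
proof -
  have UNIV: "invariant_subspace A UNIV" by (simp add: invariant_subspace_def)
  obtain X where X: "pos_semidef X" "\<forall>y. X *v (X *v y) = A *v y"
    using psd_sqrt_exists_on_invariant_subspace[OF A UNIV] by blast
  then have XA: "X ** X = A" by (auto simp: matrix_eq matrix_vector_mul_assoc)
  have sym: "transpose A = A" using A by (simp add: pos_semidef_def)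
  have "mat_sqrt A = X"
    unfolding mat_sqrt_def
  proof (rule the_equality)
    show "transpose X = X \<and> (\<forall>x. 0 \<le> x \<bullet> (X *v x)) \<and> X ** X = A"
      using X XA by (simp add: pos_semidef_def)
  next
    fix S assume "transpose S = S \<and> (\<forall>x. 0 \<le> x \<bullet> (S *v x)) \<and> S ** S = A"
    then have "pos_semidef S" "S ** S = A" by (simp_all add: pos_semidef_def)
    from psd_sqrt_unique_on_invariant_subspace[OF sym this(1) X(1) this(2) XA UNIV]
    show "S = X" by (simp add: matrix_eq)
  qed
  then show ?thesis using XA by simp
qed

section \<open>Derivatives of a spectral resolution\<close>

lemma projections_sum_mult_right:
  fixes Q :: "nat \<Rightarrow> real^'n^'n"
  assumes I: "finite I" and i: "i \<in> I" and Qidem: "Q i ** Q i = Q i"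
    and Qorth: "\<And>l. l \<in> I \<Longrightarrow> l \<noteq> i \<Longrightarrow> Q l ** Q i = 0"
  shows "(\<Sum>l\<in>I. c l *\<^sub>R Q l) ** Q i = c i *\<^sub>R Q i"
proof -
  have "(\<Sum>l\<in>I. c l *\<^sub>R Q l) ** Q i = (\<Sum>l\<in>I. c l *\<^sub>R (Q l ** Q i))"
    by (simp add: matrix_sum_rdistrib[OF I] matrix_scaleR_left)
  also have "\<dots> = (\<Sum>l\<in>I. if l = i then c i *\<^sub>R Q i else 0)"
    by (rule sum.cong) (auto simp: Qidem Qorth)
  also have "\<dots> = c i *\<^sub>R Q i" using I i by simp
  finally show ?thesis .
qed

lemma projections_sum_mult_left:
  fixes Q :: "nat \<Rightarrow> real^'n^'n"
  assumes I: "finite I" and i: "i \<in> I" and Qidem: "Q i ** Q i = Q i"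
    and Qorth: "\<And>l. l \<in> I \<Longrightarrow> l \<noteq> i \<Longrightarrow> Q i ** Q l = 0"
  shows "Q i ** (\<Sum>l\<in>I. c l *\<^sub>R Q l) = c i *\<^sub>R Q i"
proof -
  have "Q i ** (\<Sum>l\<in>I. c l *\<^sub>R Q l) = (\<Sum>l\<in>I. c l *\<^sub>R (Q i ** Q l))"
    by (simp add: matrix_sum_ldistrib[OF I] matrix_scaleR_right)
  also have "\<dots> = (\<Sum>l\<in>I. if l = i then c i *\<^sub>R Q i else 0)"
    by (rule sum.cong) (auto simp: Qidem Qorth)
  also have "\<dots> = c i *\<^sub>R Q i" using I i by simp
  finally show ?thesis .
qed

lemma projections_sum_mult:
  fixes Q :: "nat \<Rightarrow> real^'n^'n"
  assumes I: "finite I"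
    and Qidem: "\<And>i. i \<in> I \<Longrightarrow> Q i ** Q i = Q i"
    and Qorth: "\<And>i l. i \<in> I \<Longrightarrow> l \<in> I \<Longrightarrow> i \<noteq> l \<Longrightarrow> Q i ** Q l = 0"
  shows "(\<Sum>l\<in>I. c l *\<^sub>R Q l) ** (\<Sum>l\<in>I. d l *\<^sub>R Q l) = (\<Sum>l\<in>I. (c l * d l) *\<^sub>R Q l)"
proof -
  have "(\<Sum>l\<in>I. c l *\<^sub>R Q l) ** (\<Sum>l\<in>I. d l *\<^sub>R Q l) = (\<Sum>l\<in>I. c l *\<^sub>R (Q l ** (\<Sum>l\<in>I. d l *\<^sub>R Q l)))"
    by (simp add: matrix_sum_rdistrib[OF I] matrix_scaleR_left)
  also have "\<dots> = (\<Sum>l\<in>I. c l *\<^sub>R (d l *\<^sub>R Q l))"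
  proof (rule sum.cong[OF refl])
    fix x assume x: "x \<in> I"
    have "Q x ** (\<Sum>l\<in>I. d l *\<^sub>R Q l) = d x *\<^sub>R Q x"
      by (rule projections_sum_mult_left[where Q = Q, OF I x Qidem[OF x]]) (use Qorth x in auto)
    then show "c x *\<^sub>R (Q x ** (\<Sum>l\<in>I. d l *\<^sub>R Q l)) = c x *\<^sub>R (d x *\<^sub>R Q x)" by simp
  qed
  finally show ?thesis by simp
qed

text \<open>The identities below are what one gets by differentiating \<open>Q\<^sub>j\<^sup>2 = Q\<^sub>j\<close>, \<open>S Q\<^sub>j = \<lambda>\<^sub>j Q\<^sub>j\<close> and
\<open>Q\<^sub>j\<^sup>T = Q\<^sub>j\<close>; here \<open>Qd\<close>, \<open>S'\<close>, \<open>lamd\<close> stand for the derivatives of \<open>Q\<^sub>j\<close>, \<open>S\<close>, \<open>\<lambda>\<^sub>j\<close>.\<close>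

lemma projection_derivative_formula:
  fixes Q :: "nat \<Rightarrow> real^'n^'n" and S S' Qd :: "real^'n^'n" and lam :: "nat \<Rightarrow> real"
  assumes I: "finite I" and j: "j \<in> I"
    and Qidem: "\<And>i. i \<in> I \<Longrightarrow> Q i ** Q i = Q i"
    and Qsym: "\<And>i. i \<in> I \<Longrightarrow> transpose (Q i) = Q i"
    and Qorth: "\<And>i l. i \<in> I \<Longrightarrow> l \<in> I \<Longrightarrow> i \<noteq> l \<Longrightarrow> Q i ** Q l = 0"
    and Qsum: "(\<Sum>i\<in>I. Q i) = mat 1"
    and QS: "\<And>i. i \<in> I \<Longrightarrow> Q i ** S = lam i *\<^sub>R Q i"
    and dist: "\<And>i. i \<in> I \<Longrightarrow> i \<noteq> j \<Longrightarrow> lam i \<noteq> lam j"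
    and D1: "Qd ** Q j + Q j ** Qd = Qd"
    and D2: "S' ** Q j + S ** Qd = lamd *\<^sub>R Q j + lam j *\<^sub>R Qd"
    and D3: "transpose Qd = Qd"
  shows "Qd = (\<Sum>i\<in>I-{j}. (1 / (lam j - lam i)) *\<^sub>R (Q i ** S' ** Q j))
             + transpose (\<Sum>i\<in>I-{j}. (1 / (lam j - lam i)) *\<^sub>R (Q i ** S' ** Q j))"
    and "lamd *\<^sub>R Q j = Q j ** S' ** Q j"
proof -
  define X where "X = (\<Sum>i\<in>I-{j}. (1 / (lam j - lam i)) *\<^sub>R (Q i ** S' ** Q j))"
  have QiD2: "Q i ** S' ** Q j + lam i *\<^sub>R (Q i ** Qd) = lamd *\<^sub>R (Q i ** Q j) + lam j *\<^sub>R (Q i ** Qd)"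
    if i: "i \<in> I" for i
  proof -
    have "Q i ** (S' ** Q j + S ** Qd) = Q i ** (lamd *\<^sub>R Q j + lam j *\<^sub>R Qd)" using D2 by simp
    then show ?thesis
      by (simp add: matrix_add_ldistrib matrix_scaleR_right matrix_mul_assoc QS[OF i] matrix_scaleR_left)
  qed
  have diag: "Q j ** Qd ** Q j = 0"
  proof -
    have "Q j ** (Qd ** Q j + Q j ** Qd) = Q j ** Qd" using D1 by simp
    then have "Q j ** Qd ** Q j + Q j ** Qd = Q j ** Qd"
      by (simp add: matrix_add_ldistrib matrix_mul_assoc Qidem[OF j])
    then show ?thesis by simp
  qed
  have offdiag: "Q i ** Qd ** Q j = (1 / (lam j - lam i)) *\<^sub>R (Q i ** S' ** Q j)"
    if i: "i \<in> I" "i \<noteq> j" for i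
  proof -
    have ne: "lam j - lam i \<noteq> 0" using dist[OF i] by simp
    from QiD2[OF i(1)] have "Q i ** S' ** Q j = (lam j - lam i) *\<^sub>R (Q i ** Qd)"
      using Qorth[OF i(1) j i(2)] by (simp add: algebra_simps)
    then have "Q i ** Qd = (1 / (lam j - lam i)) *\<^sub>R (Q i ** S' ** Q j)"
      using ne by simp
    then have "Q i ** Qd ** Q j = (1 / (lam j - lam i)) *\<^sub>R (Q i ** S' ** Q j ** Q j)"
      by (simp add: matrix_scaleR_left)
    also have "Q i ** S' ** Q j ** Q j = Q i ** S' ** Q j"
      by (simp add: matrix_mul_assoc[symmetric] Qidem[OF j])
    finally show ?thesis .
  qed
  have right: "Qd ** Q j = X"
  proof -
    have "Qd ** Q j = (\<Sum>i\<in>I. Q i) ** Qd ** Q j" by (simp add: Qsum)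
    also have "\<dots> = (\<Sum>i\<in>I. Q i ** Qd ** Q j)" by (simp add: matrix_sum_rdistrib[OF I])
    also have "\<dots> = Q j ** Qd ** Q j + (\<Sum>i\<in>I-{j}. Q i ** Qd ** Q j)"
      using I j by (simp add: sum.remove)
    also have "\<dots> = X" unfolding diag X_def by (simp, rule sum.cong) (auto simp: offdiag)
    finally show ?thesis .
  qed
  have left: "Q j ** Qd = transpose X"
    by (simp add: right[symmetric] matrix_transpose_mul D3 Qsym[OF j])
  have "Qd = Qd ** Q j + Q j ** Qd" using D1 by simp
  then show "Qd = X + transpose X" by (simp only: right left)
  show "lamd *\<^sub>R Q j = Q j ** S' ** Q j"
    using QiD2[OF j] by (simp add: Qidem[OF j])
qed

lemma op_norm_sandwich_sum_le:
  assumes "finite I" "\<And>i. i \<in> I \<Longrightarrow> op_norm (A i) \<le> 1" "\<And>i. i \<in> I \<Longrightarrow> op_norm (B i) \<le> 1"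
  shows "op_norm (\<Sum>i\<in>I. c i *\<^sub>R (A i ** S ** B i)) \<le> (\<Sum>i\<in>I. \<bar>c i\<bar> * op_norm (S :: real^'n^'n))"
proof -
  have "op_norm (\<Sum>i\<in>I. c i *\<^sub>R (A i ** S ** B i)) \<le> (\<Sum>i\<in>I. op_norm (c i *\<^sub>R (A i ** S ** B i)))"
    by (rule op_norm_sum_le[OF assms(1)])
  also have "\<dots> = (\<Sum>i\<in>I. \<bar>c i\<bar> * op_norm (A i ** S ** B i))" by (simp add: op_norm_scaleR)
  also have "\<dots> \<le> (\<Sum>i\<in>I. \<bar>c i\<bar> * op_norm S)"
    using assms by (intro sum_mono mult_left_mono op_norm_sandwich_le) auto
  finally show ?thesis .
qed

lemma projection_derivative_op_norm_le:
  fixes Q :: "nat \<Rightarrow> real^'n^'n" and S' Qd :: "real^'n^'n"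
  assumes I: "finite I" and Qn: "\<And>i. i \<in> I \<Longrightarrow> op_norm (Q i) \<le> 1" and j: "j \<in> I"
    and Qsym: "\<And>i. i \<in> I \<Longrightarrow> transpose (Q i) = Q i" and S'sym: "transpose S' = S'"
    and Qd: "Qd = (\<Sum>i\<in>I-{j}. (1 / (lam j - lam i)) *\<^sub>R (Q i ** S' ** Q j))
             + transpose (\<Sum>i\<in>I-{j}. (1 / (lam j - lam i)) *\<^sub>R (Q i ** S' ** Q j))"
  shows "op_norm Qd \<le> 2 * (\<Sum>i\<in>I-{j}. op_norm S' / \<bar>lam j - lam i\<bar>)"
proof -
  let ?c = "\<lambda>i. 1 / (lam j - lam i)"
  define X where "X = (\<Sum>i\<in>I-{j}. ?c i *\<^sub>R (Q i ** S' ** Q j))"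
  have "transpose X = (\<Sum>i\<in>I-{j}. ?c i *\<^sub>R (Q j ** S' ** Q i))"
    unfolding X_def using I j Qsym S'sym
    by (simp add: transpose_matrix_sum transpose_scalar matrix_transpose_mul matrix_mul_assoc)
  moreover have "op_norm Qd \<le> op_norm X + op_norm (transpose X)"
    unfolding Qd X_def[symmetric] by (rule op_norm_add_le)
  ultimately have "op_norm Qd \<le> op_norm X + op_norm (\<Sum>i\<in>I-{j}. ?c i *\<^sub>R (Q j ** S' ** Q i))"
    by simp
  also have "\<dots> \<le> (\<Sum>i\<in>I-{j}. \<bar>?c i\<bar> * op_norm S') + (\<Sum>i\<in>I-{j}. \<bar>?c i\<bar> * op_norm S')"
    unfolding X_def using I j Qn by (intro add_mono op_norm_sandwich_sum_le) auto
  finally show ?thesis by (simp add: abs_divide)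
qed

section \<open>Vandermonde and Hankel determinants\<close>

definition vandermonde_mat :: "nat \<Rightarrow> (nat \<Rightarrow> real) \<Rightarrow> real Matrix.mat" where
  "vandermonde_mat M lam = Matrix.mat M M (\<lambda>(j,k). lam (Suc j) ^ Suc k)"

definition moment_hankel_mat :: "nat \<Rightarrow> (nat \<Rightarrow> real) \<Rightarrow> (nat \<Rightarrow> real) \<Rightarrow> real Matrix.mat" where
  "moment_hankel_mat M m lam = Matrix.mat M M (\<lambda>(k,l). \<Sum>j\<in>{1..M}. m j * lam j ^ (k + l + 2))"

lemma vandermonde_mat_carrier: "vandermonde_mat M lam \<in> carrier_mat M M" by (simp add: vandermonde_mat_def)

lemma sum_atLeast1_atMost_shift: "(\<Sum>j\<in>{1..M}. f j) = (\<Sum>j<M. f (Suc j :: nat))"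
proof -
  have "{1..M} = Suc ` {..<M}" by (simp add: image_Suc_lessThan)
  then show ?thesis by (simp add: sum.reindex)
qed

lemma prod_atLeast1_atMost_shift: "(\<Prod>j\<in>{1..M}. f j) = (\<Prod>j<M. f (Suc j :: nat))"
proof -
  have "{1..M} = Suc ` {..<M}" by (simp add: image_Suc_lessThan)
  then show ?thesis by (simp add: prod.reindex)
qed

lemma det_moment_hankel_mat: "Determinant.det (moment_hankel_mat M m lam) = (\<Prod>j\<in>{1..M}. m j) * Determinant.det (vandermonde_mat M lam) ^ 2"
proof -
  define W2 where "W2 = Matrix.mat M M (\<lambda>(j,l). m (Suc j) * lam (Suc j) ^ Suc l)"
  have W2c: "W2 \<in> carrier_mat M M" by (simp add: W2_def)
  have G: "moment_hankel_mat M m lam = transpose_mat (vandermonde_mat M lam) * W2"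
  proof (rule eq_matI)
    fix k l assume kl: "k < dim_row (transpose_mat (vandermonde_mat M lam) * W2)" "l < dim_col (transpose_mat (vandermonde_mat M lam) * W2)"
    then have k: "k < M" and l: "l < M" by (auto simp: vandermonde_mat_def W2_def)
    have "(transpose_mat (vandermonde_mat M lam) * W2) $$ (k, l) = (\<Sum>j<M. lam (Suc j) ^ Suc k * (m (Suc j) * lam (Suc j) ^ Suc l))"
      using k l by (simp add: vandermonde_mat_def W2_def scalar_prod_def atLeast0LessThan)
    also have "\<dots> = (\<Sum>j<M. m (Suc j) * lam (Suc j) ^ (k + l + 2))"
      by (intro sum.cong) (auto simp: power_add mult_ac)
    also have "\<dots> = (\<Sum>j\<in>{1..M}. m j * lam j ^ (k + l + 2))"
      by (rule sum_atLeast1_atMost_shift[symmetric])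
    also have "\<dots> = moment_hankel_mat M m lam $$ (k, l)"
      using k l by (simp add: moment_hankel_mat_def)
    finally show "moment_hankel_mat M m lam $$ (k, l) = (transpose_mat (vandermonde_mat M lam) * W2) $$ (k, l)" by simp
  qed (auto simp: moment_hankel_mat_def vandermonde_mat_def W2_def)
  have dW2: "Determinant.det W2 = (\<Prod>j\<in>{1..M}. m j) * Determinant.det (vandermonde_mat M lam)"
  proof -
    have "Determinant.det W2 = (\<Sum>p\<in>{p. p permutes {0..<M}}. signof p * (\<Prod>i = 0..<M. W2 $$ (i, p i)))"
      by (rule det_def'[OF W2c])
    also have "\<dots> = (\<Sum>p\<in>{p. p permutes {0..<M}}. (\<Prod>i<M. m (Suc i)) * (signof p * (\<Prod>i = 0..<M. vandermonde_mat M lam $$ (i, p i))))"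
    proof (intro sum.cong refl)
      fix p assume "p \<in> {p. p permutes {0..<M}}"
      then have pp: "p permutes {0..<M}" by simp
      have "(\<Prod>i = 0..<M. W2 $$ (i, p i)) = (\<Prod>i = 0..<M. m (Suc i) * vandermonde_mat M lam $$ (i, p i))"
        using pp by (intro prod.cong refl) (auto simp: W2_def vandermonde_mat_def permutes_in_image)
      also have "\<dots> = (\<Prod>i<M. m (Suc i)) * (\<Prod>i = 0..<M. vandermonde_mat M lam $$ (i, p i))"
        by (simp add: prod.distrib atLeast0LessThan)
      finally show "signof p * (\<Prod>i = 0..<M. W2 $$ (i, p i)) = (\<Prod>i<M. m (Suc i)) * (signof p * (\<Prod>i = 0..<M. vandermonde_mat M lam $$ (i, p i)))"
        by simp
    qed
    also have "\<dots> = (\<Prod>i<M. m (Suc i)) * Determinant.det (vandermonde_mat M lam)"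
      by (simp add: det_def'[OF vandermonde_mat_carrier] sum_distrib_left)
    finally show ?thesis by (simp only: prod_atLeast1_atMost_shift)
  qed
  have "Determinant.det (moment_hankel_mat M m lam) = Determinant.det (transpose_mat (vandermonde_mat M lam)) * Determinant.det W2"
    unfolding G by (rule det_mult[OF _ W2c]) (simp add: vandermonde_mat_def)
  also have "\<dots> = Determinant.det (vandermonde_mat M lam) * Determinant.det W2"
    by (simp add: det_transpose[OF vandermonde_mat_carrier])
  finally show ?thesis by (simp add: dW2 power2_eq_square)
qed

lemma det_vandermonde_mat_nonzero:
  assumes nz: "\<And>j. j \<in> {1..M} \<Longrightarrow> lam j \<noteq> 0" and inj: "inj_on lam {1..M}"
  shows "Determinant.det (vandermonde_mat M lam) \<noteq> 0"
proof
  assume "Determinant.det (vandermonde_mat M lam) = 0"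
  then obtain v where v: "v \<in> carrier_vec M" "v \<noteq> 0\<^sub>v M" "vandermonde_mat M lam *\<^sub>v v = 0\<^sub>v M"
    using det_0_iff_vec_prod_zero[OF vandermonde_mat_carrier] by blast
  define q where "q = (\<Sum>k<M. monom (vec_index v k) (Suc k))"
  have polyq: "poly q x = (\<Sum>k<M. vec_index v k * x ^ Suc k)" for x
    by (simp add: q_def poly_sum poly_monom)
  have cq: "coeff q (Suc k) = vec_index v k" if "k < M" for k
    using that by (simp add: q_def coeff_sum)
  obtain k where k: "k < M" "vec_index v k \<noteq> 0" using v(1,2) by (auto simp: Matrix.vec_eq_iff)
  have q0: "q \<noteq> 0" using cq[OF k(1)] k(2) by auto
  have dq: "degree q \<le> M"
    unfolding q_def by (rule degree_sum_le) (auto intro: order.trans[OF degree_monom_le])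
  have roots: "insert 0 (lam ` {1..M}) \<subseteq> {x. poly q x = 0}"
  proof
    fix x assume "x \<in> insert 0 (lam ` {1..M})"
    then show "x \<in> {x. poly q x = 0}"
    proof
      assume "x = 0" then show ?thesis by (simp add: polyq)
    next
      assume "x \<in> lam ` {1..M}"
      then obtain j where j: "j \<in> {1..M}" "x = lam j" by blast
      then have jl: "j - 1 < M" "Suc (j - 1) = j" by auto
      have "vec_index (vandermonde_mat M lam *\<^sub>v v) (j - 1) = 0" using v(3) jl by simp
      moreover have "vec_index (vandermonde_mat M lam *\<^sub>v v) (j - 1) = (\<Sum>k<M. lam j ^ Suc k * vec_index v k)"
        using jl v(1) by (simp add: vandermonde_mat_def scalar_prod_def atLeast0LessThan)
      ultimately show ?thesis using j by (simp add: polyq mult.commute)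
    qed
  qed
  have "card (insert 0 (lam ` {1..M})) = Suc M"
    using nz inj by (subst card_insert_disjoint) (auto simp: card_image)
  moreover have "card (insert 0 (lam ` {1..M})) \<le> card {x. poly q x = 0}"
    by (rule card_mono[OF poly_roots_finite[OF q0] roots])
  moreover have "card {x. poly q x = 0} \<le> degree q" by (rule card_poly_roots_bound[OF q0])
  ultimately show False using dq by simp
qed

lemma abs_det_le_row_bound:
  fixes A :: "real Matrix.mat"
  assumes A: "A \<in> carrier_mat M M" and r: "r < M"
    and c0: "\<And>k. k < M \<Longrightarrow> c k \<ge> 0" and e0: "e \<ge> 0"
    and bA: "\<And>i k. i < M \<Longrightarrow> i \<noteq> r \<Longrightarrow> k < M \<Longrightarrow> \<bar>A $$ (i, k)\<bar> \<le> c k"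
    and br: "\<And>k. k < M \<Longrightarrow> \<bar>A $$ (r, k)\<bar> \<le> e * c k"
  shows "\<bar>Determinant.det A\<bar> \<le> fact M * e * (\<Prod>k<M. c k)"
proof -
  let ?P = "{p. p permutes {0..<M}}"
  have "\<bar>Determinant.det A\<bar> = \<bar>\<Sum>p\<in>?P. signof p * (\<Prod>i = 0..<M. A $$ (i, p i))\<bar>"
    by (simp add: det_def'[OF A])
  also have "\<dots> \<le> (\<Sum>p\<in>?P. \<bar>signof p * (\<Prod>i = 0..<M. A $$ (i, p i))\<bar>)"
    by (rule sum_abs)
  also have "\<dots> \<le> (\<Sum>p\<in>?P. e * (\<Prod>k<M. c k))"
  proof (rule sum_mono)
    fix p assume "p \<in> ?P"
    then have pp: "p permutes {0..<M}" by simp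
    have pin: "p i < M" if "i < M" for i using permutes_in_image[OF pp] that by auto
    have "\<bar>signof p * (\<Prod>i = 0..<M. A $$ (i, p i))\<bar> = (\<Prod>i = 0..<M. \<bar>A $$ (i, p i)\<bar>)"
      by (simp add: abs_mult abs_prod sign_def)
    also have "\<dots> \<le> (\<Prod>i = 0..<M. (if i = r then e else 1) * c (p i))"
    proof (rule prod_mono)
      fix i assume i: "i \<in> {0..<M}"
      show "0 \<le> \<bar>A $$ (i, p i)\<bar> \<and> \<bar>A $$ (i, p i)\<bar> \<le> (if i = r then e else 1) * c (p i)"
        using i bA br pin by auto
    qed
    also have "\<dots> = (\<Prod>i = 0..<M. (if i = r then e else 1)) * (\<Prod>i = 0..<M. c (p i))"
      by (rule prod.distrib)
    also have "(\<Prod>i = 0..<M. (if i = r then e else 1)) = e"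
      using r by (simp add: prod.delta)
    also have "(\<Prod>i = 0..<M. c (p i)) = (\<Prod>k = 0..<M. c k)"
      using prod.permute[OF pp, of c] by (simp add: o_def)
    finally show "\<bar>signof p * (\<Prod>i = 0..<M. A $$ (i, p i))\<bar> \<le> e * (\<Prod>k<M. c k)"
      by (simp add: atLeast0LessThan)
  qed
  also have "\<dots> = fact M * e * (\<Prod>k<M. c k)"
    by (simp add: card_permutations)
  finally show ?thesis .
qed

lemma abs_power_diff_le:
  fixes x y L :: real
  assumes "\<bar>x\<bar> \<le> L" "\<bar>y\<bar> \<le> L"
  shows "\<bar>x ^ Suc n - y ^ Suc n\<bar> \<le> real (Suc n) * L ^ n * \<bar>x - y\<bar>"
proof (induction n)
  case 0 then show ?case by simp
next
  case (Suc n)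
  have L0: "L \<ge> 0" using assms by linarith
  have "x ^ Suc (Suc n) - y ^ Suc (Suc n) = x * (x ^ Suc n - y ^ Suc n) + y ^ Suc n * (x - y)"
    by (simp add: algebra_simps)
  then have "\<bar>x ^ Suc (Suc n) - y ^ Suc (Suc n)\<bar> \<le> \<bar>x\<bar> * \<bar>x ^ Suc n - y ^ Suc n\<bar> + \<bar>y\<bar> ^ Suc n * \<bar>x - y\<bar>"
    by (simp add: abs_mult power_abs abs_triangle_ineq[THEN order.trans])
  also have "\<dots> \<le> L * (real (Suc n) * L ^ n * \<bar>x - y\<bar>) + L ^ Suc n * \<bar>x - y\<bar>"
    using Suc.IH assms L0 by (intro add_mono mult_mono power_mono) auto
  also have "\<dots> = real (Suc (Suc n)) * L ^ Suc n * \<bar>x - y\<bar>" by (simp add: algebra_simps)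
  finally show ?case .
qed

lemma dim_vandermonde_mat [simp]: "dim_row (vandermonde_mat M lam) = M" "dim_col (vandermonde_mat M lam) = M"
  by (simp_all add: vandermonde_mat_def)

lemma vandermonde_mat_index: "i < M \<Longrightarrow> k < M \<Longrightarrow> vandermonde_mat M lam $$ (i, k) = lam (Suc i) ^ Suc k"
  by (simp add: vandermonde_mat_def)

lemma abs_vandermonde_mat_index_le:
  assumes "i < M" "k < M" "\<bar>lam (Suc i)\<bar> \<le> L"
  shows "\<bar>vandermonde_mat M lam $$ (i, k)\<bar> \<le> L ^ Suc k"
  unfolding vandermonde_mat_index[OF assms(1,2)] power_abs by (rule power_mono) (use assms(3) in auto)

lemma abs_det_vandermonde_mat_le:
  assumes M: "M > 0" and L: "L > 0" and lam: "\<And>j. j \<in> {1..M} \<Longrightarrow> \<bar>lam j\<bar> \<le> L"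
  shows "\<bar>Determinant.det (vandermonde_mat M lam)\<bar> \<le> fact M * (\<Prod>k<M. L ^ Suc k)"
proof -
  have b: "\<bar>vandermonde_mat M lam $$ (i, k)\<bar> \<le> L ^ Suc k" if "i < M" "k < M" for i k
    using that lam[of "Suc i"] by (intro abs_vandermonde_mat_index_le) auto
  have "\<bar>Determinant.det (vandermonde_mat M lam)\<bar> \<le> fact M * 1 * (\<Prod>k<M. L ^ Suc k)"
  proof (rule abs_det_le_row_bound[OF vandermonde_mat_carrier M])
    show "\<bar>vandermonde_mat M lam $$ (i, k)\<bar> \<le> L ^ Suc k" if "i < M" "i \<noteq> 0" "k < M" for i k
      using b that by blast
    show "\<bar>vandermonde_mat M lam $$ (0, k)\<bar> \<le> 1 * L ^ Suc k" if "k < M" for k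
      using b[OF M that] by simp
  qed (use L in auto)
  then show ?thesis by simp
qed

lemma abs_det_vandermonde_mat_le_entry:
  assumes M: "M > 0" and L: "L > 0" and lam: "\<And>j. j \<in> {1..M} \<Longrightarrow> \<bar>lam j\<bar> \<le> L"
    and j: "j \<in> {1..M}"
  shows "\<bar>Determinant.det (vandermonde_mat M lam)\<bar> \<le> fact M * (\<bar>lam j\<bar> / L) * (\<Prod>k<M. L ^ Suc k)"
proof (rule abs_det_le_row_bound[OF vandermonde_mat_carrier, of "j - 1"])
  show "j - 1 < M" using j by auto
  show "\<bar>vandermonde_mat M lam $$ (i, k)\<bar> \<le> L ^ Suc k" if "i < M" "i \<noteq> j - 1" "k < M" for i k
    using that lam[of "Suc i"] by (intro abs_vandermonde_mat_index_le) auto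
  show "\<bar>vandermonde_mat M lam $$ (j - 1, k)\<bar> \<le> \<bar>lam j\<bar> / L * L ^ Suc k" if "k < M" for k
  proof -
    have jj: "Suc (j - 1) = j" using j by auto
    have "\<bar>vandermonde_mat M lam $$ (j - 1, k)\<bar> = \<bar>lam j\<bar> * \<bar>lam j\<bar> ^ k"
      using that j jj by (simp add: vandermonde_mat_index power_abs abs_mult)
    also have "\<dots> \<le> \<bar>lam j\<bar> * L ^ k"
      using lam[OF j] by (intro mult_left_mono power_mono) auto
    also have "\<dots> = \<bar>lam j\<bar> / L * L ^ Suc k" using L by simp
    finally show ?thesis .
  qed
qed (use L in auto)

lemma abs_det_vandermonde_mat_le_diff:
  assumes M: "M > 0" and L: "L > 0" and lam: "\<And>j. j \<in> {1..M} \<Longrightarrow> \<bar>lam j\<bar> \<le> L"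
    and i: "i \<in> {1..M}" and j: "j \<in> {1..M}" and ij: "i \<noteq> j"
  shows "\<bar>Determinant.det (vandermonde_mat M lam)\<bar> \<le> fact M * (real M * \<bar>lam i - lam j\<bar> / L) * (\<Prod>k<M. L ^ Suc k)"
proof -
  let ?A = "addrow (-1) (i - 1) (j - 1) (vandermonde_mat M lam)"
  have Ac: "?A \<in> carrier_mat M M" using vandermonde_mat_carrier by simp
  have ii: "Suc (i - 1) = i" "i - 1 < M" using i by auto
  have jj: "Suc (j - 1) = j" "j - 1 < M" using j by auto
  have ij': "i - 1 \<noteq> j - 1" using i j ij by auto
  have "Determinant.det ?A = Determinant.det (vandermonde_mat M lam)"
    by (rule det_addrow[OF jj(2) ij' vandermonde_mat_carrier])
  moreover have "\<bar>Determinant.det ?A\<bar> \<le> fact M * (real M * \<bar>lam i - lam j\<bar> / L) * (\<Prod>k<M. L ^ Suc k)"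
  proof (rule abs_det_le_row_bound[OF Ac ii(2)])
    show "\<bar>?A $$ (r, k)\<bar> \<le> L ^ Suc k" if "r < M" "r \<noteq> i - 1" "k < M" for r k
      using that lam[of "Suc r"] abs_vandermonde_mat_index_le[of r M k lam L] by (simp add: index_mat_addrow)
    show "\<bar>?A $$ (i - 1, k)\<bar> \<le> real M * \<bar>lam i - lam j\<bar> / L * L ^ Suc k" if "k < M" for k
    proof -
      have "\<bar>?A $$ (i - 1, k)\<bar> = \<bar>lam i ^ Suc k - lam j ^ Suc k\<bar>"
        using that ii jj by (simp add: vandermonde_mat_index index_mat_addrow)
      also have "\<dots> \<le> real (Suc k) * L ^ k * \<bar>lam i - lam j\<bar>"
        by (rule abs_power_diff_le[OF lam[OF i] lam[OF j]])
      also have "\<dots> \<le> real M * L ^ k * \<bar>lam i - lam j\<bar>"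
        using that L by (intro mult_right_mono) auto
      also have "\<dots> = real M * \<bar>lam i - lam j\<bar> / L * L ^ Suc k" using L by simp
      finally show ?thesis .
    qed
  qed (use L in auto)
  ultimately show ?thesis by simp
qed

lemma abs_det_moment_hankel_mat_le:
  fixes lam m :: "nat \<Rightarrow> real"
  assumes M: "M > 0" and L: "L > 0" and lamL: "\<And>j. j \<in> {1..M} \<Longrightarrow> \<bar>lam j\<bar> \<le> L"
    and m: "\<And>j. j \<in> {1..M} \<Longrightarrow> 0 \<le> m j \<and> m j \<le> C"
    and lam0: "lam 0 = 0" and i: "i \<in> {0..M}" and j: "j \<in> {0..M}" and ij: "i \<noteq> j"
  shows "\<bar>Determinant.det (moment_hankel_mat M m lam)\<bar>
     \<le> C ^ M * fact M ^ 2 * real M * \<bar>lam i - lam j\<bar> / L * L ^ (M * (M + 1))"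
proof -
  let ?PL = "\<Prod>k<M. L ^ Suc k"
  let ?W = "\<bar>Determinant.det (vandermonde_mat M lam)\<bar>"
  have PL0: "?PL \<ge> 0" using L by (simp add: prod_nonneg)
  have C0: "C \<ge> 0" using m[of 1] M by force
  have gap: "?W \<le> fact M * (real M * \<bar>lam i - lam j\<bar> / L) * ?PL"
  proof (cases "i = 0 \<or> j = 0")
    case True
    then obtain l where l: "l \<in> {1..M}" "\<bar>lam i - lam j\<bar> = \<bar>lam l\<bar>"
      using i j ij lam0 by (metis abs_minus_commute atLeastAtMost_iff diff_zero le_numeral_extra(4) less_one linorder_not_le)
    have "?W \<le> fact M * (\<bar>lam l\<bar> / L) * ?PL" by (rule abs_det_vandermonde_mat_le_entry[OF M L lamL l(1)])
    also have "\<dots> \<le> fact M * (real M * \<bar>lam l\<bar> / L) * ?PL"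
      using M L PL0 by (intro mult_right_mono mult_left_mono divide_right_mono) (auto simp: mult_le_cancel_right1)
    finally show ?thesis using l by simp
  next
    case False
    then have i1: "i \<in> {1..M}" and j1: "j \<in> {1..M}" using i j by auto
    show ?thesis by (rule abs_det_vandermonde_mat_le_diff[OF M L lamL i1 j1 ij])
  qed
  have all: "?W \<le> fact M * ?PL" by (rule abs_det_vandermonde_mat_le[OF M L lamL])
  have e: "\<bar>Determinant.det (moment_hankel_mat M m lam)\<bar> = \<bar>\<Prod>j\<in>{1..M}. m j\<bar> * (?W * ?W)"
    by (simp add: det_moment_hankel_mat abs_mult power2_eq_square)
  have p: "\<bar>\<Prod>j\<in>{1..M}. m j\<bar> \<le> C ^ M"
  proof -
    have "(\<Prod>j\<in>{1..M}. m j) \<ge> 0" using m by (intro prod_nonneg) blast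
    then have "\<bar>\<Prod>j\<in>{1..M}. m j\<bar> = (\<Prod>j\<in>{1..M}. m j)" by simp
    also have "\<dots> \<le> (\<Prod>j\<in>{1..M}. C)" using m by (intro prod_mono) auto
    finally show ?thesis by simp
  qed
  have w: "?W * ?W \<le> (fact M * (real M * \<bar>lam i - lam j\<bar> / L) * ?PL) * (fact M * ?PL)"
    by (rule mult_mono[OF gap all]) (use M L PL0 in auto)
  have PL2: "?PL * ?PL = L ^ (M * (M + 1))"
  proof -
    have PL: "?PL = L ^ (\<Sum>k<M. Suc k)" by (simp add: power_sum)
    have "2 * (\<Sum>k<n. Suc k) = n * (n + 1)" for n :: nat by (induction n) auto
    then show ?thesis unfolding PL by (metis mult_2 power_add)
  qed
  have "\<bar>Determinant.det (moment_hankel_mat M m lam)\<bar> \<le> C ^ M * ((fact M * (real M * \<bar>lam i - lam j\<bar> / L) * ?PL) * (fact M * ?PL))"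
    unfolding e by (rule mult_mono[OF p w]) (use C0 in auto)
  also have "\<dots> = C ^ M * fact M ^ 2 * real M * \<bar>lam i - lam j\<bar> / L * (?PL * ?PL)"
    by (simp add: power2_eq_square field_simps)
  finally show ?thesis unfolding PL2 .
qed

lemma poly_fun_sum:
  "finite A \<Longrightarrow> (\<And>a. a \<in> A \<Longrightarrow> poly_fun (f a)) \<Longrightarrow> poly_fun (\<lambda>x. \<Sum>a\<in>A. f a x)"
  by (induction A rule: finite_induct) (auto intro: pf_add pf_const[of 0, simplified])

lemma poly_fun_prod:
  "finite A \<Longrightarrow> (\<And>a. a \<in> A \<Longrightarrow> poly_fun (f a)) \<Longrightarrow> poly_fun (\<lambda>x. \<Prod>a\<in>A. f a x)"
  by (induction A rule: finite_induct) (auto intro: pf_mult pf_const[of 1, simplified])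

lemma poly_fun_cmult: "poly_fun p \<Longrightarrow> poly_fun (\<lambda>x. c * p x)"
  by (rule pf_mult[OF pf_const])

lemma poly_fun_component: "poly_fun (\<lambda>x::real^'d. x $ k)"
proof -
  have "poly_fun (\<lambda>x::real^'d. x \<bullet> axis k 1)" by (rule pf_coord) simp
  then show ?thesis by (simp add: cart_eq_inner_axis)
qed

lemma poly_fun_continuous: "poly_fun p \<Longrightarrow> continuous_on UNIV p"
  by (induction rule: poly_fun.induct) (auto intro!: continuous_intros)

lemma zariski_open_imp_open: "zariski_open U \<Longrightarrow> open U"
proof -
  assume "zariski_open U"
  then obtain S where S: "\<forall>p\<in>S. poly_fun p" "U = {x. \<exists>p\<in>S. p x \<noteq> 0}"
    unfolding zariski_open_def by blast
  then have U: "U = (\<Union>p\<in>S. {x. p x \<noteq> 0})" by auto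
  have "open {x. p x \<noteq> 0}" if "p \<in> S" for p
    using open_Collect_neq[OF poly_fun_continuous[of p] continuous_on_const[of UNIV 0]] S(1) that
    by simp
  then show ?thesis unfolding U by auto
qed

definition poly_entries :: "(real^'d \<Rightarrow> real^'n^'m) \<Rightarrow> bool" where
  "poly_entries F \<longleftrightarrow> (\<forall>a c. poly_fun (\<lambda>x. F x $ a $ c))"

lemma poly_entries_const: "poly_entries (\<lambda>x. A)"
  by (simp add: poly_entries_def pf_const)

lemma poly_entries_mult: "poly_entries F \<Longrightarrow> poly_entries G \<Longrightarrow> poly_entries (\<lambda>x. F x ** G x)"
  unfolding poly_entries_def matrix_matrix_mult_def by (auto intro!: poly_fun_sum pf_mult)

lemma poly_entries_uminus: "poly_entries F \<Longrightarrow> poly_entries (\<lambda>x. - F x)"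
proof -
  assume "poly_entries F"
  then have "poly_fun (\<lambda>x. (-1) * (F x $ a $ c))" for a c
    by (intro poly_fun_cmult) (simp add: poly_entries_def)
  then show ?thesis by (simp add: poly_entries_def)
qed

lemma poly_entries_Jmu: "poly_entries (Jmu J)"
proof -
  have "Jmu J x $ a $ c = (\<Sum>k\<in>UNIV. x $ k * (J k $ a $ c))" for x a c
    by (simp add: Jmu_def sum_component)
  then show ?thesis
    unfolding poly_entries_def by (auto intro!: poly_fun_sum pf_mult poly_fun_component pf_const)
qed

lemma poly_fun_trace: "poly_entries F \<Longrightarrow> poly_fun (\<lambda>x. trace (F x))"
  unfolding poly_entries_def trace_def by (auto intro!: poly_fun_sum)

fun matpow :: "real^'n^'n \<Rightarrow> nat \<Rightarrow> real^'n^'n" where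
  "matpow A 0 = mat 1"
| "matpow A (Suc p) = A ** matpow A p"

lemma poly_entries_matpow: "poly_entries F \<Longrightarrow> poly_entries (\<lambda>x. matpow (F x) q)"
  by (induction q) (auto intro: poly_entries_const poly_entries_mult)

lemma matpow_scaleR: "matpow (c *\<^sub>R A) q = c ^ q *\<^sub>R matpow A q"
  by (induction q) (simp_all add: matrix_scaleR_left matrix_scaleR_right)

section \<open>Partial derivatives of real-analytic functions\<close>

lemma real_analytic_on_line_sums:
  fixes f :: "real^'d \<Rightarrow> real"
  assumes "real_analytic_on f S" "\<mu> \<in> S"
  obtains r a where "r > 0" "\<And>t. \<bar>t\<bar> < r \<Longrightarrow> (\<lambda>n. a n * t ^ n) sums f (\<mu> + t *\<^sub>R axis k 1)"
proof -
  obtain r c where r: "r > 0" and hs: "\<And>x. x \<in> ball \<mu> r \<Longrightarrow>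
      ((\<lambda>\<alpha>. c \<alpha> * (\<Prod>i\<in>UNIV. (x $ i - \<mu> $ i) ^ \<alpha> i)) has_sum f x) UNIV"
    using assms unfolding real_analytic_on_def by blast
  txt \<open>On the line only the multi-indices supported in \<open>{k}\<close> contribute.\<close>
  define e :: "nat \<Rightarrow> 'd \<Rightarrow> nat" where "e n = (\<lambda>i. if i = k then n else 0)" for n
  have inje: "inj e"
  proof (rule injI)
    fix m n assume "e m = e n"
    then have "e m k = e n k" by simp
    then show "m = n" by (simp add: e_def)
  qed
  have "(\<lambda>n. c (e n) * t ^ n) sums f (\<mu> + t *\<^sub>R axis k 1)" if t: "\<bar>t\<bar> < r" for t
  proof -
    let ?x = "\<mu> + t *\<^sub>R axis k 1"
    let ?g = "\<lambda>\<alpha>. c \<alpha> * (\<Prod>i\<in>UNIV. (?x $ i - \<mu> $ i) ^ \<alpha> i)"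
    have comp: "?x $ i - \<mu> $ i = (if i = k then t else 0)" for i by (simp add: axis_def)
    have vanish: "?g \<alpha> = 0" if "\<alpha> \<notin> range e" for \<alpha>
    proof -
      have "\<exists>i. i \<noteq> k \<and> \<alpha> i \<noteq> 0"
      proof (rule ccontr)
        assume "\<not> ?thesis"
        then have "\<alpha> = e (\<alpha> k)" by (auto simp: e_def fun_eq_iff)
        then show False using that by auto
      qed
      then obtain i where "i \<noteq> k" "\<alpha> i \<noteq> 0" by blast
      then have "(?x $ i - \<mu> $ i) ^ \<alpha> i = 0" by (simp add: axis_def)
      then have "(\<Prod>i\<in>UNIV. (?x $ i - \<mu> $ i) ^ \<alpha> i) = 0" by (intro prod_zero) auto
      then show ?thesis by simp
    qed
    have "(?g has_sum f ?x) UNIV" using t by (intro hs) (simp add: dist_norm)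
    moreover have "(?g has_sum f ?x) (range e) \<longleftrightarrow> (?g has_sum f ?x) UNIV"
      by (rule has_sum_cong_neutral) (use vanish in auto)
    ultimately have "(?g has_sum f ?x) (range e)" by simp
    then have "((?g \<circ> e) has_sum f ?x) UNIV"
      using has_sum_reindex[OF inj_on_subset[OF inje]] by auto
    moreover have "?g \<circ> e = (\<lambda>n. c (e n) * t ^ n)"
    proof
      fix n
      have "(\<Prod>i\<in>UNIV. (?x $ i - \<mu> $ i) ^ e n i) = (\<Prod>i\<in>UNIV. if i = k then t ^ n else 1)"
        by (rule prod.cong) (auto simp: comp e_def)
      also have "\<dots> = t ^ n" by simp
      finally show "(?g \<circ> e) n = c (e n) * t ^ n" by (simp only: o_def)
    qed
    ultimately show ?thesis by (metis has_sum_imp_sums)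
  qed
  then show ?thesis by (rule that[OF r])
qed

lemma real_analytic_on_has_partial_deriv:
  fixes f :: "real^'d \<Rightarrow> real"
  assumes "real_analytic_on f S" "\<mu> \<in> S"
  shows "((\<lambda>t. f (\<mu> + t *\<^sub>R axis k 1)) has_vector_derivative partial_deriv k f \<mu>) (at 0)"
proof -
  obtain r a where r: "r > 0"
    and sm: "\<And>t. \<bar>t\<bar> < r \<Longrightarrow> (\<lambda>n. a n * t ^ n) sums f (\<mu> + t *\<^sub>R axis k 1)"
    using real_analytic_on_line_sums[OF assms] by blast
  have "((\<lambda>z. \<Sum>n. a n * z^n) has_field_derivative (\<Sum>n. diffs a n * 0^n)) (at 0)"
  proof (rule termdiffs_strong'[of r])
    show "summable (\<lambda>n. a n * z ^ n)" if "norm z < r" for z :: real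
      using sm[of z] that by (auto simp: sums_iff)
  qed (use r in simp)
  then have d: "((\<lambda>z. \<Sum>n. a n * z^n) has_vector_derivative (\<Sum>n. diffs a n * 0^n)) (at 0)"
    by (simp add: has_real_derivative_iff_has_vector_derivative)
  have "((\<lambda>t. f (\<mu> + t *\<^sub>R axis k 1)) has_vector_derivative (\<Sum>n. diffs a n * 0^n)) (at 0)"
  proof (rule has_vector_derivative_transform_within_open[OF d, of "ball 0 r"])
    show "(\<Sum>n. a n * y^n) = f (\<mu> + y *\<^sub>R axis k 1)" if "y \<in> ball 0 r" for y
      using sm[of y] that by (simp add: sums_iff)
  qed (use r in auto)
  then show ?thesis unfolding partial_deriv_def using vector_derivative_at by (metis (no_types))
qed

lemma Jmu_scaleR: "Jmu J (t *\<^sub>R \<mu>) = t *\<^sub>R Jmu J \<mu>"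
  by (simp add: Jmu_def scaleR_sum_right)

lemma Jmu_line: "Jmu J (\<mu> + t *\<^sub>R axis k 1) = Jmu J \<mu> + t *\<^sub>R J k"
proof -
  have "Jmu J (\<mu> + t *\<^sub>R axis k 1) = Jmu J \<mu> + (\<Sum>l\<in>UNIV. (t * axis k 1 $ l) *\<^sub>R J l)"
    by (simp add: Jmu_def scaleR_add_left sum.distrib)
  also have "(\<Sum>l\<in>UNIV. (t * axis k 1 $ l) *\<^sub>R J l) = (\<Sum>l\<in>UNIV. if l = k then t *\<^sub>R J k else 0)"
    by (rule sum.cong) (auto simp: axis_def)
  finally show ?thesis by simp
qed

lemma op_norm_Jmu_le: "op_norm (Jmu J \<mu>) \<le> (\<Sum>l\<in>UNIV. op_norm (J l)) * norm \<mu>"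
proof -
  have "op_norm (Jmu J \<mu>) \<le> (\<Sum>l\<in>UNIV. op_norm (\<mu> $ l *\<^sub>R J l))"
    unfolding Jmu_def by (rule op_norm_sum_le) simp
  also have "\<dots> \<le> (\<Sum>l\<in>UNIV. norm \<mu> * op_norm (J l))"
    by (intro sum_mono) (simp add: op_norm_scaleR component_le_norm_cart mult_right_mono op_norm_nonneg)
  finally show ?thesis by (simp add: sum_distrib_left mult.commute)
qed

definition Smu :: "('d::finite \<Rightarrow> real^'n::finite^'n) \<Rightarrow> real^'d \<Rightarrow> real^'n^'n" where
  "Smu J \<mu> = - (Jmu J \<mu> ** Jmu J \<mu>)"

lemma Smu_scaleR: "Smu J (t *\<^sub>R \<mu>) = t\<^sup>2 *\<^sub>R Smu J \<mu>"
  by (simp add: Smu_def Jmu_scaleR matrix_scaleR_left matrix_scaleR_right power2_eq_square)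

definition Smu_partial :: "('d::finite \<Rightarrow> real^'n::finite^'n) \<Rightarrow> real^'d \<Rightarrow> 'd \<Rightarrow> real^'n^'n" where
  "Smu_partial J \<mu> k = - (Jmu J \<mu> ** J k + J k ** Jmu J \<mu>)"

lemma has_vector_derivative_Smu_line:
  "((\<lambda>t. Smu J (\<mu> + t *\<^sub>R axis k 1)) has_vector_derivative Smu_partial J \<mu> k) (at 0)"
proof -
  have J: "((\<lambda>t. Jmu J (\<mu> + t *\<^sub>R axis k 1)) has_vector_derivative J k) (at 0)"
    unfolding Jmu_line by (rule has_vector_derivative_eq_rhs, (rule derivative_intros)+) simp_all
  have "((\<lambda>t. - (Jmu J (\<mu> + t *\<^sub>R axis k 1) ** Jmu J (\<mu> + t *\<^sub>R axis k 1))) has_vector_derivative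
      - (Jmu J \<mu> ** J k + J k ** Jmu J \<mu>)) (at 0)"
    using has_vector_derivative_minus[OF has_vector_derivative_matrix_mult[OF J J]] by simp
  then show ?thesis by (simp add: Smu_def[abs_def] Smu_partial_def)
qed

definition hankel_det :: "('d::finite \<Rightarrow> real^'n::finite^'n) \<Rightarrow> nat \<Rightarrow> real^'d \<Rightarrow> real" where
  "hankel_det J M \<mu> = Determinant.det (Matrix.mat M M (\<lambda>(k,l). trace (matpow (Smu J \<mu>) (k + l + 2))))"

lemma hankel_det_expand:
  "hankel_det J M \<mu> = (\<Sum>p\<in>{p. p permutes {0..<M}}.
     signof p * (\<Prod>i = 0..<M. trace (matpow (Smu J \<mu>) (i + p i + 2))))"
proof -
  have "hankel_det J M \<mu> = (\<Sum>p\<in>{p. p permutes {0..<M}}. signof p *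
      (\<Prod>i = 0..<M. Matrix.mat M M (\<lambda>(k,l). trace (matpow (Smu J \<mu>) (k + l + 2))) $$ (i, p i)))"
    unfolding hankel_det_def by (rule det_def') simp
  also have "\<dots> = (\<Sum>p\<in>{p. p permutes {0..<M}}.
      signof p * (\<Prod>i = 0..<M. trace (matpow (Smu J \<mu>) (i + p i + 2))))"
  proof (intro sum.cong refl arg_cong2[where f = "(*)"] prod.cong)
    fix p i assume "p \<in> {p. p permutes {0..<M}}" "i \<in> {0..<M}"
    then have "i < M" "p i < M" using permutes_in_image[of p "{0..<M}" i] by auto
    then show "Matrix.mat M M (\<lambda>(k,l). trace (matpow (Smu J \<mu>) (k + l + 2))) $$ (i, p i)
        = trace (matpow (Smu J \<mu>) (i + p i + 2))"
      by simp
  qed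
  finally show ?thesis .
qed

lemma poly_fun_hankel_det: "poly_fun (hankel_det J M)"
proof -
  have "poly_entries (Smu J)"
    unfolding Smu_def[abs_def] by (intro poly_entries_uminus poly_entries_mult poly_entries_Jmu)
  then show ?thesis
    unfolding hankel_det_expand[abs_def]
    by (intro poly_fun_sum poly_fun_cmult poly_fun_prod poly_fun_trace poly_entries_matpow)
      (auto simp: finite_permutations)
qed

lemma sum_index_plus_permutation:
  fixes p :: "nat \<Rightarrow> nat"
  assumes "p permutes {0..<M}"
  shows "(\<Sum>i = 0..<M. i + p i + 2) = M * (M + 1)"
proof -
  have perm: "(\<Sum>i = 0..<M. p i) = (\<Sum>i = 0..<M. i)"
    using sum.permute[OF assms, of "\<lambda>i. i"] by (simp add: o_def)
  have gauss: "(\<Sum>i<n. i) + (\<Sum>i<n. i) + (\<Sum>i<n. (2::nat)) = n * (n + 1)" for n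
    by (induction n) auto
  have "(\<Sum>i = 0..<M. i + p i + 2) = (\<Sum>i = 0..<M. i) + (\<Sum>i = 0..<M. p i) + (\<Sum>i = 0..<M. 2)"
    by (simp only: sum.distrib)
  also have "\<dots> = (\<Sum>i = 0..<M. i) + (\<Sum>i = 0..<M. i) + (\<Sum>i = 0..<M. 2)"
    by (simp only: perm)
  also have "\<dots> = M * (M + 1)"
    using gauss[of M] by (simp only: atLeast0LessThan)
  finally show ?thesis .
qed

lemma hankel_det_scaleR: "hankel_det J M (t *\<^sub>R \<mu>) = t ^ (2 * (M * (M + 1))) * hankel_det J M \<mu>"
proof -
  have "signof p * (\<Prod>i = 0..<M. trace (matpow (Smu J (t *\<^sub>R \<mu>)) (i + p i + 2)))
      = t ^ (2 * (M * (M + 1))) * (signof p * (\<Prod>i = 0..<M. trace (matpow (Smu J \<mu>) (i + p i + 2))))"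
    if "p permutes {0..<M}" for p
  proof -
    have "(\<Prod>i = 0..<M. trace (matpow (Smu J (t *\<^sub>R \<mu>)) (i + p i + 2)))
        = (\<Prod>i = 0..<M. (t\<^sup>2) ^ (i + p i + 2)) * (\<Prod>i = 0..<M. trace (matpow (Smu J \<mu>) (i + p i + 2)))"
      by (simp only: Smu_scaleR matpow_scaleR trace_scaleR prod.distrib)
    also have "(\<Prod>i = 0..<M. (t\<^sup>2) ^ (i + p i + 2)) = (t\<^sup>2) ^ (\<Sum>i = 0..<M. i + p i + 2)"
      by (simp add: power_sum)
    also have "(\<Sum>i = 0..<M. i + p i + 2) = M * (M + 1)"
      by (rule sum_index_plus_permutation[OF that])
    finally have "(\<Prod>i = 0..<M. trace (matpow (Smu J (t *\<^sub>R \<mu>)) (i + p i + 2)))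
        = (t\<^sup>2) ^ (M * (M + 1)) * (\<Prod>i = 0..<M. trace (matpow (Smu J \<mu>) (i + p i + 2)))" .
    moreover have "t ^ (2 * (M * (M + 1))) = (t\<^sup>2) ^ (M * (M + 1))" by (rule power_mult)
    ultimately show ?thesis by (simp only:) (simp add: mult_ac)
  qed
  then show ?thesis unfolding hankel_det_expand sum_distrib_left by (intro sum.cong) auto
qed

section \<open>The spectral resolution of \<open>-J\<^sub>\<mu>\<^sup>2\<close>\<close>

locale sqrt_spectral_resolution =
  fixes J :: "'d::finite \<Rightarrow> real^'n::finite^'n"
    and \<Lambda> :: "(real^'d) set"
    and M :: nat and r :: "nat \<Rightarrow> nat"
    and b :: "nat \<Rightarrow> real^'d \<Rightarrow> real"
    and P :: "nat \<Rightarrow> real^'d \<Rightarrow> real^'n^'n"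
  assumes J_skew: "\<And>k. transpose (J k) = - J k"
    and Lambda_ne: "\<Lambda> \<noteq> {}"
    and Lambda_zariski: "zariski_open \<Lambda>"
    and M_pos: "M > 0"
    and r_pos: "\<And>j. j \<in> {1..M} \<Longrightarrow> r j > 0"
    and decomp: "\<And>\<mu>. \<mu> \<in> \<Lambda> \<Longrightarrow> mat_sqrt (- (Jmu J \<mu> ** Jmu J \<mu>)) = (\<Sum>j\<in>{1..M}. b j \<mu> *\<^sub>R P j \<mu>)"
    and b_pos: "\<And>\<mu> j. \<mu> \<in> \<Lambda> \<Longrightarrow> j \<in> {1..M} \<Longrightarrow> b j \<mu> > 0"
    and b_distinct: "\<And>\<mu> i j. \<mu> \<in> \<Lambda> \<Longrightarrow> i \<in> {1..M} \<Longrightarrow> j \<in> {1..M} \<Longrightarrow> i \<noteq> j \<Longrightarrow> b i \<mu> \<noteq> b j \<mu>"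
    and P_proj: "\<And>\<mu> j. \<mu> \<in> \<Lambda> \<Longrightarrow> j \<in> {1..M} \<Longrightarrow>
                   P j \<mu> ** P j \<mu> = P j \<mu> \<and> transpose (P j \<mu>) = P j \<mu>"
    and P_orth: "\<And>\<mu> i j. \<mu> \<in> \<Lambda> \<Longrightarrow> i \<in> {1..M} \<Longrightarrow> j \<in> {1..M} \<Longrightarrow> i \<noteq> j \<Longrightarrow>
                   P i \<mu> ** P j \<mu> = 0"
    and P_rank: "\<And>\<mu> j. \<mu> \<in> \<Lambda> \<Longrightarrow> j \<in> {1..M} \<Longrightarrow> rank (P j \<mu>) = 2 * r j"
    and b_analytic: "\<And>j. j \<in> {1..M} \<Longrightarrow> real_analytic_on (b j) \<Lambda>"
    and P_analytic: "\<And>j a c. j \<in> {1..M} \<Longrightarrow> real_analytic_on (\<lambda>\<mu>. P j \<mu> $ a $ c) \<Lambda>"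
    and P0_def: "\<And>\<mu>. \<mu> \<in> \<Lambda> \<Longrightarrow> P 0 \<mu> = mat 1 - (\<Sum>j\<in>{1..M}. P j \<mu>)"
    and P0_ker: "\<And>\<mu>. \<mu> \<in> \<Lambda> \<Longrightarrow>
                   P 0 \<mu> ** P 0 \<mu> = P 0 \<mu> \<and> transpose (P 0 \<mu>) = P 0 \<mu> \<and>
                   range (\<lambda>x. P 0 \<mu> *v x) = {x. Jmu J \<mu> *v x = 0}"

begin

definition eigval :: "real^'d \<Rightarrow> nat \<Rightarrow> real" where
  "eigval \<mu> j = (if j = 0 then 0 else (b j \<mu>)\<^sup>2)"

lemma Jmu_skew: "transpose (Jmu J \<mu>) = - Jmu J \<mu>"
  by (simp add: Jmu_def transpose_matrix_sum transpose_scalar J_skew sum_negf[symmetric])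

lemma transpose_Smu: "transpose (Smu J \<mu>) = Smu J \<mu>"
  by (simp add: Smu_def matrix_transpose_mul Jmu_skew transpose_matrix_uminus
      matrix_uminus_left matrix_uminus_right)

lemma transpose_Smu_partial: "transpose (Smu_partial J \<mu> k) = Smu_partial J \<mu> k"
  by (simp add: Smu_partial_def transpose_matrix_uminus transpose_matrix_add transpose_matrix_diff matrix_transpose_mul
      Jmu_skew J_skew matrix_uminus_left matrix_uminus_right add.commute)

lemma Smu_pos_semidef: "pos_semidef (Smu J \<mu>)"
proof -
  have "x \<bullet> (Smu J \<mu> *v x) = (Jmu J \<mu> *v x) \<bullet> (Jmu J \<mu> *v x)" for x
    using inner_matrix_vector_transpose[of "Jmu J \<mu>" x "Jmu J \<mu> *v x"]
    by (simp add: Smu_def Jmu_skew matrix_vector_uminus_left matrix_vector_mul_assoc[symmetric])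
  then show ?thesis by (simp add: pos_semidef_def transpose_Smu)
qed

lemma Smu_eq_sum: "\<mu> \<in> \<Lambda> \<Longrightarrow> Smu J \<mu> = (\<Sum>j\<in>{1..M}. (b j \<mu>)\<^sup>2 *\<^sub>R P j \<mu>)"
proof -
  assume mu: "\<mu> \<in> \<Lambda>"
  have "Smu J \<mu> = mat_sqrt (Smu J \<mu>) ** mat_sqrt (Smu J \<mu>)"
    using mat_sqrt_square[OF Smu_pos_semidef] by simp
  also have "\<dots> = (\<Sum>j\<in>{1..M}. b j \<mu> *\<^sub>R P j \<mu>) ** (\<Sum>j\<in>{1..M}. b j \<mu> *\<^sub>R P j \<mu>)"
    using decomp[OF mu] by (simp add: Smu_def)
  also have "\<dots> = (\<Sum>j\<in>{1..M}. (b j \<mu> * b j \<mu>) *\<^sub>R P j \<mu>)"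
    by (rule projections_sum_mult) (use P_proj[OF mu] P_orth[OF mu] in auto)
  finally show ?thesis by (simp add: power2_eq_square)
qed

lemma P_idem: "\<mu> \<in> \<Lambda> \<Longrightarrow> j \<in> {0..M} \<Longrightarrow> P j \<mu> ** P j \<mu> = P j \<mu>"
  using P_proj[of \<mu> j] P0_ker[of \<mu>] by (cases "j = 0") auto

lemma P_sym: "\<mu> \<in> \<Lambda> \<Longrightarrow> j \<in> {0..M} \<Longrightarrow> transpose (P j \<mu>) = P j \<mu>"
  using P_proj[of \<mu> j] P0_ker[of \<mu>] by (cases "j = 0") auto

lemma op_norm_P_le: "\<mu> \<in> \<Lambda> \<Longrightarrow> j \<in> {0..M} \<Longrightarrow> op_norm (P j \<mu>) \<le> 1"
  by (rule op_norm_projection_le[OF P_idem P_sym])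

lemma P_nonzero: "\<mu> \<in> \<Lambda> \<Longrightarrow> j \<in> {1..M} \<Longrightarrow> P j \<mu> \<noteq> 0"
  using P_rank[of \<mu> j] r_pos[of j] by (auto simp: rank_0)

lemma P0_mult_P:
  assumes mu: "\<mu> \<in> \<Lambda>" and j: "j \<in> {1..M}"
  shows "P 0 \<mu> ** P j \<mu> = 0" "P j \<mu> ** P 0 \<mu> = 0"
proof -
  have "(\<Sum>l\<in>{1..M}. 1 *\<^sub>R P l \<mu>) ** P j \<mu> = 1 *\<^sub>R P j \<mu>"
    by (rule projections_sum_mult_right) (use j P_proj[OF mu j] P_orth[OF mu] in auto)
  then show "P 0 \<mu> ** P j \<mu> = 0" by (simp add: P0_def[OF mu] matrix_diff_rdistrib)
  have "P j \<mu> ** (\<Sum>l\<in>{1..M}. 1 *\<^sub>R P l \<mu>) = 1 *\<^sub>R P j \<mu>"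
    by (rule projections_sum_mult_left) (use j P_proj[OF mu j] P_orth[OF mu] in auto)
  then show "P j \<mu> ** P 0 \<mu> = 0" by (simp add: P0_def[OF mu] matrix_diff_ldistrib)
qed

lemma P_orthogonal: "\<mu> \<in> \<Lambda> \<Longrightarrow> i \<in> {0..M} \<Longrightarrow> j \<in> {0..M} \<Longrightarrow> i \<noteq> j \<Longrightarrow> P i \<mu> ** P j \<mu> = 0"
  using P_orth[of \<mu> i j] P0_mult_P[of \<mu> i] P0_mult_P[of \<mu> j]
  by (cases "i = 0"; cases "j = 0") auto

lemma P_sum_eq_id: "\<mu> \<in> \<Lambda> \<Longrightarrow> (\<Sum>j\<in>{0..M}. P j \<mu>) = mat 1"
proof -
  have "{0..M} = insert 0 {1..M}" by auto
  then show "\<mu> \<in> \<Lambda> \<Longrightarrow> ?thesis" using P0_def[of \<mu>] by simp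
qed

lemma Smu_mult_P: "\<mu> \<in> \<Lambda> \<Longrightarrow> j \<in> {0..M} \<Longrightarrow> Smu J \<mu> ** P j \<mu> = eigval \<mu> j *\<^sub>R P j \<mu>"
proof -
  assume mu: "\<mu> \<in> \<Lambda>" and j: "j \<in> {0..M}"
  show ?thesis
  proof (cases "j = 0")
    case True
    have "(Jmu J \<mu> ** P 0 \<mu>) *v x = 0" for x
    proof -
      have "P 0 \<mu> *v x \<in> range (\<lambda>x. P 0 \<mu> *v x)" by simp
      then show ?thesis using P0_ker[OF mu] by (auto simp: matrix_vector_mul_assoc[symmetric])
    qed
    then have "Jmu J \<mu> ** P 0 \<mu> = 0" by (simp add: matrix_eq)
    then show ?thesis using True
      by (simp add: Smu_def eigval_def matrix_uminus_left matrix_mul_assoc[symmetric])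
  next
    case False
    then have j1: "j \<in> {1..M}" using j by auto
    have "eigval \<mu> j = (b j \<mu>)\<^sup>2" using False by (simp add: eigval_def)
    then show ?thesis unfolding Smu_eq_sum[OF mu]
      by (simp only:) (rule projections_sum_mult_right, use j1 P_proj[OF mu j1] P_orth[OF mu] in auto)
  qed
qed

lemma P_mult_Smu:
  assumes "\<mu> \<in> \<Lambda>" "j \<in> {0..M}"
  shows "P j \<mu> ** Smu J \<mu> = eigval \<mu> j *\<^sub>R P j \<mu>"
proof -
  have "transpose (Smu J \<mu> ** P j \<mu>) = transpose (eigval \<mu> j *\<^sub>R P j \<mu>)"
    using Smu_mult_P[OF assms] by simp
  then show ?thesis by (simp add: matrix_transpose_mul transpose_scalar transpose_Smu P_sym[OF assms])
qed

lemma eigval_pos: "\<mu> \<in> \<Lambda> \<Longrightarrow> j \<in> {1..M} \<Longrightarrow> eigval \<mu> j > 0"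
  using b_pos[of \<mu> j] by (auto simp: eigval_def)

lemma eigval_distinct:
  "\<mu> \<in> \<Lambda> \<Longrightarrow> i \<in> {0..M} \<Longrightarrow> j \<in> {0..M} \<Longrightarrow> i \<noteq> j \<Longrightarrow> eigval \<mu> i \<noteq> eigval \<mu> j"
proof -
  assume mu: "\<mu> \<in> \<Lambda>" and i: "i \<in> {0..M}" and j: "j \<in> {0..M}" and ij: "i \<noteq> j"
  show ?thesis
  proof (cases "i = 0 \<or> j = 0")
    case True
    then show ?thesis using eigval_pos[OF mu, of i] eigval_pos[OF mu, of j] i j ij
      by (auto simp: eigval_def)
  next
    case False
    then have "i \<in> {1..M}" "j \<in> {1..M}" using i j by auto
    then have "b i \<mu> \<noteq> b j \<mu>" "b i \<mu> > 0" "b j \<mu> > 0"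
      using b_distinct[OF mu _ _ ij] b_pos[OF mu] by auto
    then show ?thesis using False by (simp add: eigval_def power2_eq_iff)
  qed
qed

lemma open_Lambda: "open \<Lambda>"
  by (rule zariski_open_imp_open[OF Lambda_zariski])

lemma Lambda_nonzero: "\<mu> \<in> \<Lambda> \<Longrightarrow> \<mu> \<noteq> 0"
proof
  assume mu: "\<mu> \<in> \<Lambda>" and "\<mu> = 0"
  then have "Smu J \<mu> = 0" by (simp add: Smu_def Jmu_def)
  moreover have one: "1 \<in> {1..M}" using M_pos by simp
  ultimately have "eigval \<mu> 1 *\<^sub>R P 1 \<mu> = 0" using Smu_mult_P[OF mu, of 1] by simp
  then show False using eigval_pos[OF mu one] P_nonzero[OF mu one] by simp
qed

lemma matpow_Smu:
  assumes mu: "\<mu> \<in> \<Lambda>"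
  shows "matpow (Smu J \<mu>) (Suc q) = (\<Sum>j\<in>{1..M}. eigval \<mu> j ^ Suc q *\<^sub>R P j \<mu>)"
proof (induction q)
  case 0
  have "(\<Sum>j\<in>{1..M}. eigval \<mu> j ^ Suc 0 *\<^sub>R P j \<mu>) = (\<Sum>j\<in>{1..M}. (b j \<mu>)\<^sup>2 *\<^sub>R P j \<mu>)"
    by (rule sum.cong) (auto simp: eigval_def)
  then show ?case using Smu_eq_sum[OF mu] by simp
next
  case (Suc q)
  then have "matpow (Smu J \<mu>) (Suc (Suc q)) = (\<Sum>j\<in>{1..M}. eigval \<mu> j ^ Suc q *\<^sub>R (Smu J \<mu> ** P j \<mu>))"
    by (simp add: matrix_sum_ldistrib matrix_scaleR_right)
  also have "\<dots> = (\<Sum>j\<in>{1..M}. eigval \<mu> j ^ Suc (Suc q) *\<^sub>R P j \<mu>)"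
    by (rule sum.cong) (auto simp: Smu_mult_P[OF mu] mult.commute)
  finally show ?case .
qed

lemma hankel_det_eq_moment_hankel:
  "\<mu> \<in> \<Lambda> \<Longrightarrow> hankel_det J M \<mu> = Determinant.det (moment_hankel_mat M (\<lambda>j. trace (P j \<mu>)) (eigval \<mu>))"
proof -
  assume mu: "\<mu> \<in> \<Lambda>"
  have "trace (matpow (Smu J \<mu>) (k + l + 2)) = (\<Sum>j\<in>{1..M}. trace (P j \<mu>) * eigval \<mu> j ^ (k + l + 2))"
    for k l
  proof -
    have e: "k + l + 2 = Suc (k + l + 1)" by simp
    show ?thesis
      unfolding e by (simp only: matpow_Smu[OF mu]) (simp add: trace_matrix_sum trace_scaleR mult.commute)
  qed
  then show ?thesis unfolding hankel_det_def moment_hankel_mat_def by simp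
qed

lemma hankel_det_nonzero: "\<mu> \<in> \<Lambda> \<Longrightarrow> hankel_det J M \<mu> \<noteq> 0"
proof -
  assume mu: "\<mu> \<in> \<Lambda>"
  have "trace (P j \<mu>) > 0" if "j \<in> {1..M}" for j
    using trace_projection_bounds(1) P_proj[OF mu that] P_nonzero[OF mu that] by blast
  then have "(\<Prod>j\<in>{1..M}. trace (P j \<mu>)) \<noteq> 0" by (simp add: prod_zero_iff) force
  moreover have "Determinant.det (vandermonde_mat M (eigval \<mu>)) \<noteq> 0"
  proof (rule det_vandermonde_mat_nonzero)
    show "eigval \<mu> j \<noteq> 0" if "j \<in> {1..M}" for j using eigval_pos[OF mu that] by simp
    show "inj_on (eigval \<mu>) {1..M}"
      by (rule inj_onI) (use eigval_distinct[OF mu] in force)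
  qed
  ultimately show ?thesis by (simp add: hankel_det_eq_moment_hankel[OF mu] det_moment_hankel_mat)
qed

lemma line_in_Lambda:
  assumes "\<mu> \<in> \<Lambda>"
  obtains T where "open T" "0 \<in> T" "\<And>t. t \<in> T \<Longrightarrow> \<mu> + t *\<^sub>R axis k 1 \<in> \<Lambda>"
proof -
  obtain \<delta> where "\<delta> > 0" "ball \<mu> \<delta> \<subseteq> \<Lambda>" using open_Lambda assms open_contains_ball by blast
  then show ?thesis by (intro that[of "ball 0 \<delta>"]) (auto simp: dist_norm)
qed

lemma has_vector_derivative_P_line:
  assumes mu: "\<mu> \<in> \<Lambda>" and j: "j \<in> {0..M}"
  shows "((\<lambda>t. P j (\<mu> + t *\<^sub>R axis k 1)) has_vector_derivative partial_deriv k (P j) \<mu>) (at 0)"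
proof -
  have analytic: "((\<lambda>t. P i (\<mu> + t *\<^sub>R axis k 1)) has_vector_derivative partial_deriv k (P i) \<mu>) (at 0)"
    if i: "i \<in> {1..M}" for i
  proof -
    let ?D = "\<chi> a c. partial_deriv k (\<lambda>\<mu>. P i \<mu> $ a $ c) \<mu>"
    have "((\<lambda>t. P i (\<mu> + t *\<^sub>R axis k 1)) has_vector_derivative ?D) (at 0)"
      by (intro has_vector_derivative_componentwise)
        (simp add: real_analytic_on_has_partial_deriv[OF P_analytic[OF i] mu])
    moreover from this have "partial_deriv k (P i) \<mu> = ?D"
      unfolding partial_deriv_def by (rule vector_derivative_at)
    ultimately show ?thesis by simp
  qed
  show ?thesis
  proof (cases "j = 0")
    case False
    then show ?thesis using analytic j by auto
  next
    case True
    obtain T where T: "open T" "0 \<in> T" "\<And>t. t \<in> T \<Longrightarrow> \<mu> + t *\<^sub>R axis k 1 \<in> \<Lambda>"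
      using line_in_Lambda[OF mu] by blast
    have "((\<lambda>t. mat 1 - (\<Sum>i\<in>{1..M}. P i (\<mu> + t *\<^sub>R axis k 1))) has_vector_derivative
        0 - (\<Sum>i\<in>{1..M}. partial_deriv k (P i) \<mu>)) (at 0)"
      by (intro has_vector_derivative_diff has_vector_derivative_const has_vector_derivative_sum analytic)
    then have P0: "((\<lambda>t. P 0 (\<mu> + t *\<^sub>R axis k 1)) has_vector_derivative
        0 - (\<Sum>i\<in>{1..M}. partial_deriv k (P i) \<mu>)) (at 0)"
      by (rule has_vector_derivative_transform_within_open[OF _ T(1,2)]) (simp add: P0_def T(3))
    moreover from this have "partial_deriv k (P 0) \<mu> = 0 - (\<Sum>i\<in>{1..M}. partial_deriv k (P i) \<mu>)"
      unfolding partial_deriv_def by (rule vector_derivative_at)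
    ultimately show ?thesis using True by simp
  qed
qed

lemma has_field_derivative_eigval_line:
  assumes mu: "\<mu> \<in> \<Lambda>" and j: "j \<in> {0..M}"
  shows "((\<lambda>t. eigval (\<mu> + t *\<^sub>R axis k 1) j) has_field_derivative
           (if j = 0 then 0 else 2 * b j \<mu> * partial_deriv k (b j) \<mu>)) (at 0)"
proof (cases "j = 0")
  case True then show ?thesis by (simp add: eigval_def)
next
  case False
  then have j1: "j \<in> {1..M}" using j by auto
  have "((\<lambda>t. b j (\<mu> + t *\<^sub>R axis k 1)) has_field_derivative partial_deriv k (b j) \<mu>) (at 0)"
    unfolding has_real_derivative_iff_has_vector_derivative
    by (rule real_analytic_on_has_partial_deriv[OF b_analytic[OF j1] mu])
  from DERIV_power[OF this, where n = 2] show ?thesis using False by (simp add: eigval_def mult_ac)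
qed

lemma partial_deriv_P_eq:
  fixes k :: 'd
  assumes mu: "\<mu> \<in> \<Lambda>" and j: "j \<in> {0..M}"
  defines "X \<equiv> (\<Sum>i\<in>{0..M}-{j}. (1 / (eigval \<mu> j - eigval \<mu> i)) *\<^sub>R
                  (P i \<mu> ** Smu_partial J \<mu> k ** P j \<mu>))"
  shows "partial_deriv k (P j) \<mu> = X + transpose X"
    and "(if j = 0 then 0 else 2 * b j \<mu> * partial_deriv k (b j) \<mu>) *\<^sub>R P j \<mu>
           = P j \<mu> ** Smu_partial J \<mu> k ** P j \<mu>"
proof -
  let ?\<gamma> = "\<lambda>t. \<mu> + t *\<^sub>R axis k 1"
  let ?Pd = "partial_deriv k (P j) \<mu>"
  let ?lamd = "if j = 0 then 0 else 2 * b j \<mu> * partial_deriv k (b j) \<mu>"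
  obtain T where T: "open T" "0 \<in> T" and \<gamma>T: "\<And>t. t \<in> T \<Longrightarrow> ?\<gamma> t \<in> \<Lambda>"
    using line_in_Lambda[OF mu] by blast
  note P' = has_vector_derivative_P_line[OF mu j, of k]
  have "((\<lambda>t. P j (?\<gamma> t) ** P j (?\<gamma> t)) has_vector_derivative P j \<mu> ** ?Pd + ?Pd ** P j \<mu>) (at 0)"
    using has_vector_derivative_matrix_mult[OF P' P'] by simp
  from vector_derivative_eq_on_open[OF this P' T] P_idem[OF \<gamma>T j]
  have D1: "?Pd ** P j \<mu> + P j \<mu> ** ?Pd = ?Pd" by (simp add: add.commute)
  have SP': "((\<lambda>t. Smu J (?\<gamma> t) ** P j (?\<gamma> t)) has_vector_derivative
      Smu J \<mu> ** ?Pd + Smu_partial J \<mu> k ** P j \<mu>) (at 0)"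
    using has_vector_derivative_matrix_mult[OF has_vector_derivative_Smu_line P'] by simp
  have lamP': "((\<lambda>t. eigval (?\<gamma> t) j *\<^sub>R P j (?\<gamma> t)) has_vector_derivative
      eigval \<mu> j *\<^sub>R ?Pd + ?lamd *\<^sub>R P j \<mu>) (at 0)"
    using has_vector_derivative_scaleR[OF has_field_derivative_eigval_line[OF mu j] P'] by simp
  from vector_derivative_eq_on_open[OF SP' lamP' T] Smu_mult_P[OF \<gamma>T j]
  have D2: "Smu_partial J \<mu> k ** P j \<mu> + Smu J \<mu> ** ?Pd = ?lamd *\<^sub>R P j \<mu> + eigval \<mu> j *\<^sub>R ?Pd"
    by (simp add: add.commute)
  from vector_derivative_eq_on_open[OF has_vector_derivative_transpose[OF P'] P' T] P_sym[OF \<gamma>T j]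
  have D3: "transpose ?Pd = ?Pd" by simp
  have dist: "\<And>i. i \<in> {0..M} \<Longrightarrow> i \<noteq> j \<Longrightarrow> eigval \<mu> i \<noteq> eigval \<mu> j"
    using eigval_distinct[OF mu _ j] by blast
  note formula = projection_derivative_formula[where Q = "\<lambda>i. P i \<mu>" and S' = "Smu_partial J \<mu> k",
      OF finite_atLeastAtMost j P_idem[OF mu] P_sym[OF mu] P_orthogonal[OF mu] P_sum_eq_id[OF mu]
      P_mult_Smu[OF mu] dist D1 D2 D3]
  show "?Pd = X + transpose X" unfolding X_def by (rule formula(1))
  show "?lamd *\<^sub>R P j \<mu> = P j \<mu> ** Smu_partial J \<mu> k ** P j \<mu>" by (rule formula(2))
qed

lemma abs_partial_deriv_b_div_le:
  assumes mu: "\<mu> \<in> \<Lambda>" and j: "j \<in> {1..M}"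
  shows "\<bar>partial_deriv k (b j) \<mu> / b j \<mu>\<bar> \<le> op_norm (Smu_partial J \<mu> k) / (2 * eigval \<mu> j)"
proof -
  have j0: "j \<in> {0..M}" "j \<noteq> 0" using j by auto
  then have "(2 * b j \<mu> * partial_deriv k (b j) \<mu>) *\<^sub>R P j \<mu> = P j \<mu> ** Smu_partial J \<mu> k ** P j \<mu>"
    using partial_deriv_P_eq(2)[OF mu j0(1), of k] by simp
  then have "\<bar>2 * b j \<mu> * partial_deriv k (b j) \<mu>\<bar> \<le> op_norm (Smu_partial J \<mu> k)"
    by (rule sandwich_eigenvalue_abs_le_op_norm[OF _ op_norm_P_le[OF mu j0(1)] P_nonzero[OF mu j]])
  moreover have "eigval \<mu> j = b j \<mu> * b j \<mu>" "b j \<mu> > 0"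
    using j b_pos[OF mu j] by (auto simp: eigval_def power2_eq_square)
  ultimately show ?thesis by (simp add: abs_mult field_simps)
qed

lemma op_norm_partial_deriv_P_le:
  assumes mu: "\<mu> \<in> \<Lambda>" and j: "j \<in> {0..M}"
  shows "op_norm (partial_deriv k (P j) \<mu>)
           \<le> 2 * (\<Sum>i\<in>{0..M}-{j}. op_norm (Smu_partial J \<mu> k) / \<bar>eigval \<mu> j - eigval \<mu> i\<bar>)"
  by (rule projection_derivative_op_norm_le[where Q = "\<lambda>i. P i \<mu>", OF _ op_norm_P_le[OF mu] j
        P_sym[OF mu] transpose_Smu_partial partial_deriv_P_eq(1)[OF mu j]]) simp

definition Jnorm :: real where
  "Jnorm = (\<Sum>l\<in>UNIV. op_norm (J l)) + 1"

lemma Jnorm_pos: "Jnorm > 0"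
proof -
  have "(\<Sum>l\<in>UNIV. op_norm (J l)) \<ge> 0" by (intro sum_nonneg) (simp add: op_norm_nonneg)
  then show ?thesis by (simp add: Jnorm_def)
qed

lemma op_norm_Jmu_le_Jnorm: "op_norm (Jmu J \<mu>) \<le> Jnorm * norm \<mu>"
proof -
  have "(\<Sum>l\<in>UNIV. op_norm (J l)) * norm \<mu> \<le> Jnorm * norm \<mu>"
    unfolding Jnorm_def by (intro mult_right_mono) auto
  then show ?thesis using op_norm_Jmu_le[of J \<mu>] by linarith
qed

lemma op_norm_Smu_partial_le: "op_norm (Smu_partial J \<mu> k) \<le> 2 * Jnorm\<^sup>2 * norm \<mu>"
proof -
  have "op_norm (J k) \<le> (\<Sum>l\<in>UNIV. op_norm (J l))"
    by (rule member_le_sum) (auto simp: op_norm_nonneg)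
  then have Jk: "op_norm (J k) \<le> Jnorm" by (simp add: Jnorm_def)
  have "op_norm (Smu_partial J \<mu> k) \<le> op_norm (Jmu J \<mu>) * op_norm (J k) + op_norm (J k) * op_norm (Jmu J \<mu>)"
    unfolding Smu_partial_def op_norm_uminus
    by (rule order.trans[OF op_norm_add_le add_mono[OF op_norm_mult_le op_norm_mult_le]])
  also have "\<dots> \<le> (Jnorm * norm \<mu>) * Jnorm + Jnorm * (Jnorm * norm \<mu>)"
    using op_norm_Jmu_le_Jnorm[of \<mu>] Jk Jnorm_pos op_norm_nonneg
    by (intro add_mono mult_mono) auto
  finally show ?thesis by (simp add: power2_eq_square algebra_simps)
qed

lemma abs_eigval_le: "\<mu> \<in> \<Lambda> \<Longrightarrow> j \<in> {1..M} \<Longrightarrow> \<bar>eigval \<mu> j\<bar> \<le> Jnorm\<^sup>2 * (norm \<mu>)\<^sup>2"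
proof -
  assume mu: "\<mu> \<in> \<Lambda>" and j: "j \<in> {1..M}"
  have "\<bar>eigval \<mu> j\<bar> \<le> op_norm (Smu J \<mu>)"
    by (rule eigenvalue_abs_le_op_norm[OF Smu_mult_P[OF mu] P_nonzero[OF mu j]]) (use j in auto)
  also have "\<dots> \<le> op_norm (Jmu J \<mu>) * op_norm (Jmu J \<mu>)"
    unfolding Smu_def op_norm_uminus by (rule op_norm_mult_le)
  also have "\<dots> \<le> (Jnorm * norm \<mu>) * (Jnorm * norm \<mu>)"
    using op_norm_Jmu_le_Jnorm[of \<mu>] op_norm_nonneg Jnorm_pos by (intro mult_mono) auto
  finally show ?thesis by (simp add: power2_eq_square algebra_simps)
qed

definition hankel_const :: real where
  "hankel_const = real CARD('n) ^ M * fact M ^ 2 * real M"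

lemma inverse_eigval_gap_le:
  assumes mu: "\<mu> \<in> \<Lambda>" and i: "i \<in> {0..M}" and j: "j \<in> {0..M}" and ij: "i \<noteq> j"
  shows "1 / \<bar>eigval \<mu> j - eigval \<mu> i\<bar>
           \<le> hankel_const * (Jnorm\<^sup>2 * (norm \<mu>)\<^sup>2) ^ (M * (M + 1) - 1) / \<bar>hankel_det J M \<mu>\<bar>"
proof -
  let ?L = "Jnorm\<^sup>2 * (norm \<mu>)\<^sup>2"
  let ?g = "\<bar>eigval \<mu> j - eigval \<mu> i\<bar>"
  have L: "?L > 0" using Jnorm_pos Lambda_nonzero[OF mu] by simp
  have g: "?g > 0" using eigval_distinct[OF mu i j ij] by simp
  have H: "\<bar>hankel_det J M \<mu>\<bar> > 0" using hankel_det_nonzero[OF mu] by simp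
  have "\<bar>hankel_det J M \<mu>\<bar> \<le> hankel_const * ?g / ?L * ?L ^ (M * (M + 1))"
    unfolding hankel_det_eq_moment_hankel[OF mu] hankel_const_def
  proof (rule abs_det_moment_hankel_mat_le[OF M_pos L _ _ _ j i ij[symmetric]])
    show "\<bar>eigval \<mu> j\<bar> \<le> ?L" if "j \<in> {1..M}" for j by (rule abs_eigval_le[OF mu that])
    show "0 \<le> trace (P j \<mu>) \<and> trace (P j \<mu>) \<le> real CARD('n)" if "j \<in> {1..M}" for j
      using trace_projection_bounds[of "P j \<mu>"] P_proj[OF mu that] P_nonzero[OF mu that] by force
  qed (simp add: eigval_def)
  also have "\<dots> = hankel_const * ?g * ?L ^ (M * (M + 1) - 1)"
  proof -
    have "M * (M + 1) = Suc (M * (M + 1) - 1)" using M_pos by simp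
    then have pow: "?L ^ (M * (M + 1)) = ?L * ?L ^ (M * (M + 1) - 1)" by (metis power_Suc)
    have cancel: "a / y * (y * c) = a * c" if "y \<noteq> 0" for a c y :: real
      using that by (simp add: field_simps)
    show ?thesis unfolding pow by (rule cancel) (use L in linarith)
  qed
  finally have "\<bar>hankel_det J M \<mu>\<bar> \<le> hankel_const * ?g * ?L ^ (M * (M + 1) - 1)" .
  then show ?thesis using g H by (simp add: field_simps)
qed

definition deriv_const :: real where
  "deriv_const = 4 * real M * hankel_const * Jnorm ^ (2 * (M * (M + 1)))"

lemma deriv_const_pos: "deriv_const > 0"
  using M_pos Jnorm_pos by (simp add: deriv_const_def hankel_const_def)

lemma partial_deriv_bounds:
  assumes mu: "\<mu> \<in> \<Lambda>"
  defines "D \<equiv> deriv_const * norm \<mu> ^ (2 * (M * (M + 1)) - 1) / \<bar>hankel_det J M \<mu>\<bar>"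
  shows "j \<in> {1..M} \<Longrightarrow> \<bar>partial_deriv k (b j) \<mu> / b j \<mu>\<bar> \<le> D"
    and "j \<in> {0..M} \<Longrightarrow> op_norm (partial_deriv k (P j) \<mu>) \<le> D"
proof -
  let ?S = "2 * Jnorm\<^sup>2 * norm \<mu>"
  let ?G = "hankel_const * (Jnorm\<^sup>2 * (norm \<mu>)\<^sup>2) ^ (M * (M + 1) - 1) / \<bar>hankel_det J M \<mu>\<bar>"
  have S: "op_norm (Smu_partial J \<mu> k) \<le> ?S" by (rule op_norm_Smu_partial_le)
  have S0: "0 \<le> op_norm (Smu_partial J \<mu> k)" by (rule op_norm_nonneg)
  have G0: "0 \<le> ?G" by (simp add: hankel_const_def)
  have SG: "0 \<le> ?S * ?G" by (intro mult_nonneg_nonneg G0) simp_all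
  have half_le: "x / 2 \<le> 1 * x" if "0 \<le> x" for x :: real using that by simp
  have gap: "op_norm (Smu_partial J \<mu> k) / \<bar>eigval \<mu> j - eigval \<mu> i\<bar> \<le> ?S * ?G"
    if "i \<in> {0..M}" "j \<in> {0..M}" "i \<noteq> j" for i j
  proof -
    have "op_norm (Smu_partial J \<mu> k) * (1 / \<bar>eigval \<mu> j - eigval \<mu> i\<bar>) \<le> ?S * ?G"
      by (rule mult_mono[OF S inverse_eigval_gap_le[OF mu that]]) auto
    then show ?thesis by simp
  qed
  obtain n where n: "M * (M + 1) = Suc n" using M_pos by (cases "M * (M + 1)") auto
  have "Jnorm ^ (2 * Suc n) * norm \<mu> ^ (2 * Suc n - 1) = ?S / 2 * (Jnorm\<^sup>2 * (norm \<mu>)\<^sup>2) ^ n"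
  proof -
    have "2 * Suc n - 1 = Suc (2 * n)" by simp
    then show ?thesis by (simp only: power_mult power_Suc power_mult_distrib) (simp add: mult_ac)
  qed
  then have "D = 2 * real M * ?S * (hankel_const * (Jnorm\<^sup>2 * (norm \<mu>)\<^sup>2) ^ n) / \<bar>hankel_det J M \<mu>\<bar>"
    unfolding D_def deriv_const_def n by (simp only: mult.assoc) (simp add: mult_ac)
  moreover have "M * (M + 1) - 1 = n" using n by simp
  ultimately have D: "D = 2 * real M * (?S * ?G)" by (simp only:) (simp add: mult_ac)
  show "\<bar>partial_deriv k (b j) \<mu> / b j \<mu>\<bar> \<le> D" if j: "j \<in> {1..M}"
  proof -
    have "\<bar>partial_deriv k (b j) \<mu> / b j \<mu>\<bar> \<le> op_norm (Smu_partial J \<mu> k) / (2 * eigval \<mu> j)"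
      by (rule abs_partial_deriv_b_div_le[OF mu j])
    also have "\<dots> = op_norm (Smu_partial J \<mu> k) / \<bar>eigval \<mu> j - eigval \<mu> 0\<bar> / 2"
      using eigval_pos[OF mu j] by (simp add: eigval_def[of _ 0])
    also have "\<dots> \<le> ?S * ?G / 2"
      using gap[of 0 j] j by (intro divide_right_mono) auto
    also have "\<dots> \<le> 1 * (?S * ?G)"
      by (rule half_le[OF SG])
    also have "\<dots> \<le> D" unfolding D using SG M_pos by (intro mult_right_mono) auto
    finally show ?thesis .
  qed
  show "op_norm (partial_deriv k (P j) \<mu>) \<le> D" if j: "j \<in> {0..M}"
  proof -
    have "op_norm (partial_deriv k (P j) \<mu>)
        \<le> 2 * (\<Sum>i\<in>{0..M}-{j}. op_norm (Smu_partial J \<mu> k) / \<bar>eigval \<mu> j - eigval \<mu> i\<bar>)"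
      by (rule op_norm_partial_deriv_P_le[OF mu j])
    also have "\<dots> \<le> 2 * (\<Sum>i\<in>{0..M}-{j}. ?S * ?G)"
      using gap j by (intro mult_left_mono sum_mono) auto
    also have "\<dots> = D" using j by (simp add: D card_Diff_singleton)
    finally show ?thesis .
  qed
qed

theorem exists_homogeneous_polynomial_bound:
  "\<exists>H :: real^'d \<Rightarrow> real. \<exists>h :: nat. homog_poly h H \<and> (\<exists>\<mu>. H \<mu> \<noteq> 0) \<and>
     (\<forall>\<mu>\<in>\<Lambda>. H \<mu> \<noteq> 0 \<and>
        (\<forall>j\<in>{1..M}. \<forall>k.
           \<bar>partial_deriv k (b j) \<mu> / b j \<mu>\<bar> \<le> norm \<mu> powr (real h - 1) / \<bar>H \<mu>\<bar>) \<and>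
        (\<forall>j\<in>{0..M}. \<forall>k.
           op_norm (partial_deriv k (P j) \<mu>) \<le> norm \<mu> powr (real h - 1) / \<bar>H \<mu>\<bar>))"
proof -
  define h where "h = 2 * (M * (M + 1))"
  define H where "H \<mu> = (1 / deriv_const) * hankel_det J M \<mu>" for \<mu>
  have H_nonzero: "H \<mu> \<noteq> 0" if "\<mu> \<in> \<Lambda>" for \<mu>
    using hankel_det_nonzero[OF that] deriv_const_pos by (simp add: H_def)
  have "poly_fun H" unfolding H_def by (rule poly_fun_cmult[OF poly_fun_hankel_det])
  moreover have "H (t *\<^sub>R x) = t ^ h * H x" for t x
    by (simp add: H_def h_def hankel_det_scaleR)
  ultimately have homog: "homog_poly h H" by (simp add: homog_poly_def)
  have bound: "norm \<mu> powr (real h - 1) / \<bar>H \<mu>\<bar>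
      = deriv_const * norm \<mu> ^ (2 * (M * (M + 1)) - 1) / \<bar>hankel_det J M \<mu>\<bar>" if "\<mu> \<in> \<Lambda>" for \<mu>
  proof -
    have "norm \<mu> > 0" "h \<ge> 1" using Lambda_nonzero[OF that] M_pos by (auto simp: h_def)
    then have "norm \<mu> powr (real h - 1) = norm \<mu> ^ (h - 1)"
      by (simp add: powr_realpow[symmetric] of_nat_diff)
    then show ?thesis using deriv_const_pos by (simp add: H_def h_def abs_mult field_simps)
  qed
  show ?thesis
  proof (intro exI[of _ H] exI[of _ h] conjI ballI allI)
    show "homog_poly h H" by (rule homog)
  next
    show "\<exists>\<mu>. H \<mu> \<noteq> 0" using Lambda_ne H_nonzero by blast
  next
    fix \<mu> assume "\<mu> \<in> \<Lambda>"
    then show "H \<mu> \<noteq> 0" by (rule H_nonzero)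
  next
    fix \<mu> j k assume mu: "\<mu> \<in> \<Lambda>" and j: "j \<in> {1..M}"
    show "\<bar>partial_deriv k (b j) \<mu> / b j \<mu>\<bar> \<le> norm \<mu> powr (real h - 1) / \<bar>H \<mu>\<bar>"
      unfolding bound[OF mu] by (rule partial_deriv_bounds(1)[OF mu j])
  next
    fix \<mu> j k assume mu: "\<mu> \<in> \<Lambda>" and j: "j \<in> {0..M}"
    show "op_norm (partial_deriv k (P j) \<mu>) \<le> norm \<mu> powr (real h - 1) / \<bar>H \<mu>\<bar>"
      unfolding bound[OF mu] by (rule partial_deriv_bounds(2)[OF mu j])
  qed
qed

end

theorem lemma4p2:
  fixes J :: "'d::finite \<Rightarrow> real^'n::finite^'n"
    and \<Lambda> :: "(real^'d) set"
    and M :: nat and r :: "nat \<Rightarrow> nat"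
    and b :: "nat \<Rightarrow> real^'d \<Rightarrow> real"
    and P :: "nat \<Rightarrow> real^'d \<Rightarrow> real^'n^'n"
  assumes J_skew: "\<And>k. transpose (J k) = - J k"
    and J_HS_orthonormal: "\<And>k l. trace (transpose (J k) ** J l) = (if k = l then 1 else 0)"
    and Lambda_ne: "\<Lambda> \<noteq> {}"
    and Lambda_zariski: "zariski_open \<Lambda>"
    and Lambda_homog: "dilation_invariant \<Lambda>"
    and M_pos: "M > 0"
    and r_pos: "\<And>j. j \<in> {1..M} \<Longrightarrow> r j > 0"
    and decomp: "\<And>\<mu>. \<mu> \<in> \<Lambda> \<Longrightarrow> mat_sqrt (- (Jmu J \<mu> ** Jmu J \<mu>)) = (\<Sum>j\<in>{1..M}. b j \<mu> *\<^sub>R P j \<mu>)"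
    and b_pos: "\<And>\<mu> j. \<mu> \<in> \<Lambda> \<Longrightarrow> j \<in> {1..M} \<Longrightarrow> b j \<mu> > 0"
    and b_distinct: "\<And>\<mu> i j. \<mu> \<in> \<Lambda> \<Longrightarrow> i \<in> {1..M} \<Longrightarrow> j \<in> {1..M} \<Longrightarrow> i \<noteq> j \<Longrightarrow> b i \<mu> \<noteq> b j \<mu>"
    and P_proj: "\<And>\<mu> j. \<mu> \<in> \<Lambda> \<Longrightarrow> j \<in> {1..M} \<Longrightarrow>
                   P j \<mu> ** P j \<mu> = P j \<mu> \<and> transpose (P j \<mu>) = P j \<mu>"
    and P_orth: "\<And>\<mu> i j. \<mu> \<in> \<Lambda> \<Longrightarrow> i \<in> {1..M} \<Longrightarrow> j \<in> {1..M} \<Longrightarrow> i \<noteq> j \<Longrightarrow>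
                   P i \<mu> ** P j \<mu> = 0"
    and P_rank: "\<And>\<mu> j. \<mu> \<in> \<Lambda> \<Longrightarrow> j \<in> {1..M} \<Longrightarrow> rank (P j \<mu>) = 2 * r j"
    and b_algebraic: "\<And>j. j \<in> {1..M} \<Longrightarrow> algebraic_fun_on \<Lambda> (b j)"
    and P_algebraic: "\<And>j a c. j \<in> {1..M} \<Longrightarrow> algebraic_fun_on \<Lambda> (\<lambda>\<mu>. P j \<mu> $ a $ c)"
    and b_analytic: "\<And>j. j \<in> {1..M} \<Longrightarrow> real_analytic_on (b j) \<Lambda>"
    and P_analytic: "\<And>j a c. j \<in> {1..M} \<Longrightarrow> real_analytic_on (\<lambda>\<mu>. P j \<mu> $ a $ c) \<Lambda>"
    and P0_def: "\<And>\<mu>. \<mu> \<in> \<Lambda> \<Longrightarrow> P 0 \<mu> = mat 1 - (\<Sum>j\<in>{1..M}. P j \<mu>)"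
    and P0_ker: "\<And>\<mu>. \<mu> \<in> \<Lambda> \<Longrightarrow>
                   P 0 \<mu> ** P 0 \<mu> = P 0 \<mu> \<and> transpose (P 0 \<mu>) = P 0 \<mu> \<and>
                   range (\<lambda>x. P 0 \<mu> *v x) = {x. Jmu J \<mu> *v x = 0}"
  shows "\<exists>H :: real^'d \<Rightarrow> real. \<exists>h :: nat. homog_poly h H \<and> (\<exists>\<mu>. H \<mu> \<noteq> 0) \<and>
           (\<forall>\<mu>\<in>\<Lambda>. H \<mu> \<noteq> 0 \<and>
              (\<forall>j\<in>{1..M}. \<forall>k.
                 \<bar>partial_deriv k (b j) \<mu> / b j \<mu>\<bar> \<le> norm \<mu> powr (real h - 1) / \<bar>H \<mu>\<bar>) \<and>
              (\<forall>j\<in>{0..M}. \<forall>k.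
                 op_norm (partial_deriv k (P j) \<mu>) \<le> norm \<mu> powr (real h - 1) / \<bar>H \<mu>\<bar>))"
proof -
  interpret sqrt_spectral_resolution J \<Lambda> M r b P
    by unfold_locales (fact J_skew Lambda_ne Lambda_zariski M_pos r_pos decomp b_pos b_distinct P_proj
        P_orth P_rank b_analytic P_analytic P0_def P0_ker)+
  show ?thesis by (rule exists_homogeneous_polynomial_bound)
qed

end
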